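(* Let $0<\lambda<\mu$. Then the decoherence-free subalgebra \[ \mathcal N(\mathcal T)=\{x\in\mathcal B(\mathsf h):\ \mathcal T_t(x^*x)=\mathcal T_t(x^* )\mathcal T_t(x),\ \mathcal T_t(xx^* )=\mathcal T_t(x)\mathcal T_t(x^* )\ \ \forall t\ge0\} \] and the fixed point algebra $\mathcal F(\mathcal T)=\{x\in\mathcal B(\mathsf h):\mathcal T_t(x)=x\ \forall t\ge0\}$ are trivial, i.e. both equal $\mathbb C\mathbb 1$.
   Context: Let $\mathsf h=\ell^2(\mathbb N)$ with canonical orthonormal basis $(e_n)_{n\ge0}$ and let $N$ be the number operator, $Ne_n=ne_n$. Fix $r>0$ and set $\omega_n=n(n+r-1)$ for $n\ge0$. On $\mathrm{Dom}(N)=\{u=\sum_n u_ne_n:\sum_n n^2|u_n|^2<\infty\}$ define $Be_n=\omega_n^{1/2}e_{n-1}$ for $n\ge1$, $Be_0=0$, and $B^+e_n=\omega_{n+1}^{1/2}e_{n+1}$. Fix real numbers $\lambda,\mu>0$ and $\zeta^+,\zeta^-$. Let $G$ be the operator with domain $\mathrm{Dom}(N^2)$ given by $Ge_n=-\big((\tfrac{\lambda^2}{2}+i\zeta^+)\omega_{n+1}+(\tfrac{\mu^2}{2}+i\zeta^-)\omega_n\big)e_n$, generating the contraction semigroup $P_t=e^{tG}$, and let $L_1=\mu B$, $L_2=\lambda B^+$. The quantum Markov semigroup $\mathcal T=(\mathcal T_t)_{t\ge0}$ on $\mathcal B(\mathsf h)$ is the minimal quantum dynamical semigroup associated with $G,L_1,L_2$,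 i.e. the minimal solution of $\langle v,\mathcal T_t(x)u\rangle=\langle P_tv,xP_tu\rangle+\sum_{\ell=1}^2\int_0^t\langle L_\ell P_{t-s}v,\mathcal T_s(x)L_\ell P_{t-s}u\rangle\,ds$ for $u,v\in\mathrm{Dom}(G)$, $x\in\mathcal B(\mathsf h)$; its formal generator is $\mathcal L(x)=-\frac{\lambda^2}{2}(BB^+x-2BxB^++xBB^+)-\frac{\mu^2}{2}(B^+Bx-2B^+xB+xB^+B)+i[\zeta^+BB^++\zeta^-B^+B,x]$. It is identity preserving when $\lambda\le\mu$. *)

theory Defs
  imports "HOL-Analysis.Analysis"
begin

text \<open>The Hilbert space h = l2(N) is modelled by square-summable sequences
  nat \<Rightarrow> complex (coordinates w.r.t. the canonical basis e_n).
  A bounded operator x in B(h) is represented faithfully and canonically by its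
  matrix (x i j = <e_i, x e_j>), subject to the predicate bdd_op.\<close>

type_synonym vec = "nat \<Rightarrow> complex"
type_synonym mat = "nat \<Rightarrow> nat \<Rightarrow> complex"

definition l2 :: "vec \<Rightarrow> bool" where
  "l2 u \<longleftrightarrow> summable (\<lambda>n. (cmod (u n))^2)"

definition l2norm2 :: "vec \<Rightarrow> real" where
  "l2norm2 u = (\<Sum>n. (cmod (u n))^2)"

definition ip :: "vec \<Rightarrow> vec \<Rightarrow> complex" where
  "ip v u = (\<Sum>n. cnj (v n) * u n)"

definition app :: "mat \<Rightarrow> vec \<Rightarrow> vec" where
  "app M u = (\<lambda>i. \<Sum>j. M i j * u j)"

definition bdd_op :: "mat \<Rightarrow> bool" where
  "bdd_op M \<longleftrightarrow> (\<exists>C. \<forall>u. l2 u \<longrightarrow>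
      (\<forall>i. summable (\<lambda>j. M i j * u j)) \<and> l2 (app M u) \<and> l2norm2 (app M u) \<le> C * l2norm2 u)"

definition mmult :: "mat \<Rightarrow> mat \<Rightarrow> mat" where
  "mmult A B = (\<lambda>i j. \<Sum>k. A i k * B k j)"

definition adj :: "mat \<Rightarrow> mat" where
  "adj A = (\<lambda>i j. cnj (A j i))"

definition idm :: mat where
  "idm = (\<lambda>i j. if i = j then 1 else 0)"

definition positive_op :: "mat \<Rightarrow> bool" where
  "positive_op M \<longleftrightarrow> bdd_op M \<and>
     (\<forall>u. l2 u \<longrightarrow> Im (ip u (app M u)) = 0 \<and> 0 \<le> Re (ip u (app M u)))"

definition op_le :: "mat \<Rightarrow> mat \<Rightarrow> bool" where
  "op_le A B \<longleftrightarrow> positive_op (\<lambda>i j. B i j - A i j)"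

definition omega :: "real \<Rightarrow> nat \<Rightarrow> real" where
  "omega r n = real n * (real n + r - 1)"

text \<open>B e_n = omega_n^(1/2) e_(n-1), i.e. (B u)_n = omega_(n+1)^(1/2) u_(n+1).\<close>
definition annB :: "real \<Rightarrow> vec \<Rightarrow> vec" where
  "annB r u = (\<lambda>n. complex_of_real (sqrt (omega r (Suc n))) * u (Suc n))"

text \<open>B^+ e_n = omega_(n+1)^(1/2) e_(n+1), i.e. (B^+ u)_n = omega_n^(1/2) u_(n-1), (B^+ u)_0 = 0.\<close>
definition creB :: "real \<Rightarrow> vec \<Rightarrow> vec" where
  "creB r u = (\<lambda>n. case n of 0 \<Rightarrow> 0 | Suc m \<Rightarrow> complex_of_real (sqrt (omega r n)) * u m)"

text \<open>Eigenvalues of the diagonal operator G.\<close>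
definition gdiag :: "real \<Rightarrow> real \<Rightarrow> real \<Rightarrow> real \<Rightarrow> real \<Rightarrow> nat \<Rightarrow> complex" where
  "gdiag r lam mu zp zm n =
     - ((complex_of_real (lam^2 / 2) + \<i> * complex_of_real zp) * complex_of_real (omega r (Suc n))
      + (complex_of_real (mu^2 / 2) + \<i> * complex_of_real zm) * complex_of_real (omega r n))"

text \<open>P_t = e^(tG), diagonal with entries exp(t g_n).\<close>
definition Pt :: "real \<Rightarrow> real \<Rightarrow> real \<Rightarrow> real \<Rightarrow> real \<Rightarrow> real \<Rightarrow> vec \<Rightarrow> vec" where
  "Pt r lam mu zp zm t u = (\<lambda>n. exp (complex_of_real t * gdiag r lam mu zp zm n) * u n)"

text \<open>Dom(G) = Dom(N^2).\<close>
definition domG :: "vec \<Rightarrow> bool" where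
  "domG u \<longleftrightarrow> summable (\<lambda>n. (real n ^ 2 * cmod (u n))^2)"

definition L1 :: "real \<Rightarrow> real \<Rightarrow> vec \<Rightarrow> vec" where
  "L1 r mu u = (\<lambda>n. complex_of_real mu * annB r u n)"

definition L2 :: "real \<Rightarrow> real \<Rightarrow> vec \<Rightarrow> vec" where
  "L2 r lam u = (\<lambda>n. complex_of_real lam * creB r u n)"

definition qds_eq :: "real \<Rightarrow> real \<Rightarrow> real \<Rightarrow> real \<Rightarrow> real \<Rightarrow> (real \<Rightarrow> mat \<Rightarrow> mat) \<Rightarrow> bool" where
  "qds_eq r lam mu zp zm S \<longleftrightarrow>
     (\<forall>t x u v. 0 \<le> t \<longrightarrow> bdd_op x \<longrightarrow> domG u \<longrightarrow> domG v \<longrightarrow>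
        ((\<lambda>s. ip (L1 r mu (Pt r lam mu zp zm (t - s) v)) (app (S s x) (L1 r mu (Pt r lam mu zp zm (t - s) u)))
            + ip (L2 r lam (Pt r lam mu zp zm (t - s) v)) (app (S s x) (L2 r lam (Pt r lam mu zp zm (t - s) u))))
         has_integral
           (ip v (app (S t x) u) - ip (Pt r lam mu zp zm t v) (app x (Pt r lam mu zp zm t u)))) {0..t})"

definition qds_solution :: "real \<Rightarrow> real \<Rightarrow> real \<Rightarrow> real \<Rightarrow> real \<Rightarrow> (real \<Rightarrow> mat \<Rightarrow> mat) \<Rightarrow> bool" where
  "qds_solution r lam mu zp zm S \<longleftrightarrow>
     (\<forall>t x. 0 \<le> t \<longrightarrow> bdd_op x \<longrightarrow> bdd_op (S t x)) \<and>
     (\<forall>t x. 0 \<le> t \<longrightarrow> positive_op x \<longrightarrow> positive_op (S t x)) \<and>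
     qds_eq r lam mu zp zm S"

definition minimal_qds :: "real \<Rightarrow> real \<Rightarrow> real \<Rightarrow> real \<Rightarrow> real \<Rightarrow> (real \<Rightarrow> mat \<Rightarrow> mat) \<Rightarrow> bool" where
  "minimal_qds r lam mu zp zm T \<longleftrightarrow>
     qds_solution r lam mu zp zm T \<and>
     (\<forall>t a b x y. 0 \<le> t \<longrightarrow> bdd_op x \<longrightarrow> bdd_op y \<longrightarrow>
        T t (\<lambda>i j. a * x i j + b * y i j) = (\<lambda>i j. a * T t x i j + b * T t y i j)) \<and>
     (\<forall>S. qds_solution r lam mu zp zm S \<longrightarrow>
        (\<forall>t x. 0 \<le> t \<longrightarrow> positive_op x \<longrightarrow> op_le (T t x) (S t x)))"

definition dec_free :: "(real \<Rightarrow> mat \<Rightarrow> mat) \<Rightarrow> mat set" where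
  "dec_free T = {x. bdd_op x \<and> (\<forall>t\<ge>0.
      T t (mmult (adj x) x) = mmult (T t (adj x)) (T t x) \<and>
      T t (mmult x (adj x)) = mmult (T t x) (T t (adj x)))}"

definition fixed_pts :: "(real \<Rightarrow> mat \<Rightarrow> mat) \<Rightarrow> mat set" where
  "fixed_pts T = {x. bdd_op x \<and> (\<forall>t\<ge>0. T t x = x)}"

definition scalars :: "mat set" where
  "scalars = {x. \<exists>c::complex. x = (\<lambda>i j. c * idm i j)}"

end

theory Submission
  imports Defs "HOL-Real_Asymp.Real_Asymp"
begin

text \<open>In the basis \<open>(e\<^sub>n)\<close> the matrix entries \<open>y\<^sub>i\<^sub>j(t)\<close> of \<open>T\<^sub>t(x)\<close> solve scalar linear equations
  \<open>y\<^sub>i\<^sub>j' = (cnj g\<^sub>i + g\<^sub>j) y\<^sub>i\<^sub>j + \<mu>\<^sup>2 \<surd>(\<omega>\<^sub>i\<omega>\<^sub>j) y\<^sub>i\<^sub>-\<^sub>1\<^sub>,\<^sub>j\<^sub>-\<^sub>1 + \<lambda>\<^sup>2 \<surd>(\<omega>\<^sub>i\<^sub>+\<^sub>1\<omega>\<^sub>j\<^sub>+\<^sub>1) y\<^sub>i\<^sub>+\<^sub>1\<^sub>,\<^sub>j\<^sub>+\<^sub>1\<close>,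
  obtained by testing the defining integral equation on basis vectors.

  For a fixed point these become three-term recursions along each diagonal. Since \<open>\<lambda> < \<mu>\<close>,
  a nonconstant diagonal or a nonzero off-diagonal would have to grow geometrically against
  polynomially growing weights, contradicting boundedness. The same argument, applied to the
  time integrals of \<open>1 - T\<^sub>t(\<one>)\<^sub>i\<^sub>i\<close> (nonnegative by minimality), shows \<open>T\<^sub>t(\<one>) = \<one>\<close>; with
  positivity this makes \<open>T\<^sub>t\<close> commute with adjoints.

  For \<open>x\<close> in the decoherence-free algebra the column norms \<open>\<Sum>\<^sub>k |T\<^sub>s(x)\<^sub>k\<^sub>n|\<^sup>2 = T\<^sub>s(x\<^sup>*x)\<^sub>n\<^sub>n\<close>
  obey the diagonal equation. Subtracting the sum over \<open>k\<close> of the equations for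
  \<open>|T\<^sub>s(x)\<^sub>k\<^sub>n|\<^sup>2\<close> leaves the time integral of \<open>\<Sum>\<^sub>k \<mu>\<^sup>2|[B, T\<^sub>s(x)]\<^sub>k\<^sub>n|\<^sup>2 + \<lambda>\<^sup>2|[B\<^sup>+, T\<^sub>s(x)]\<^sub>k\<^sub>n|\<^sup>2\<close>,
  which therefore vanishes; at \<open>s = 0\<close> this says that \<open>x\<close> commutes with \<open>B\<close> and \<open>B\<^sup>+\<close>, so \<open>x\<close> is
  scalar.\<close>

section \<open>Square-summable sequences and bounded matrices\<close>

definition basis_vec :: "complex \<Rightarrow> nat \<Rightarrow> vec" where
  "basis_vec c j = (\<lambda>n. if n = j then c else 0)"

definition trunc_vec :: "nat \<Rightarrow> vec \<Rightarrow> vec" where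
  "trunc_vec N u = (\<lambda>n. if n < N then u n else 0)"

lemma sums_mult_basis_vec: "(\<lambda>n. f n * basis_vec c j n) sums (f j * c)"
proof -
  have "(\<lambda>n. f n * basis_vec c j n) = (\<lambda>n. if n = j then f j * c else 0)"
    by (auto simp: basis_vec_def)
  then show ?thesis using sums_single[of j "\<lambda>_. f j * c"] by simp
qed

lemma sums_norm2_basis_vec: "(\<lambda>n. (cmod (basis_vec c j n))^2) sums (cmod c)^2"
proof -
  have "(\<lambda>n. (cmod (basis_vec c j n))^2) = (\<lambda>n. if n = j then (cmod c)^2 else 0)"
    by (auto simp: basis_vec_def)
  then show ?thesis using sums_single[of j "\<lambda>_. (cmod c)^2"] by simp
qed

lemma l2_basis_vec: "l2 (basis_vec c j)"
  unfolding l2_def using sums_norm2_basis_vec by (rule sums_summable)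

lemma l2norm2_basis_vec: "l2norm2 (basis_vec c j) = (cmod c)^2"
  unfolding l2norm2_def using sums_norm2_basis_vec by (rule sums_unique[symmetric])

lemma domG_basis_vec: "domG (basis_vec c j)"
proof -
  have "(\<lambda>n. (real n ^ 2 * cmod (basis_vec c j n))^2) = (\<lambda>n. if n = j then (real j ^ 2 * cmod c)^2 else 0)"
    by (auto simp: basis_vec_def)
  then show ?thesis unfolding domG_def using sums_single[of j "\<lambda>_. (real j ^ 2 * cmod c)^2"]
    by (simp add: sums_summable)
qed

lemma app_basis_vec: "app M (basis_vec c j) = (\<lambda>i. M i j * c)"
  unfolding app_def using sums_mult_basis_vec[of "M _" c j] by (auto simp: sums_iff)

lemma ip_basis_vec: "ip (basis_vec c i) w = cnj c * w i"
proof -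
  have "(\<lambda>n. cnj (basis_vec c i n) * w n) = (\<lambda>n. w n * basis_vec (cnj c) i n)"
    by (auto simp: basis_vec_def)
  then show ?thesis
    unfolding ip_def using sums_mult_basis_vec[of w "cnj c" i] by (simp add: sums_iff mult.commute)
qed

lemma sums_norm2_trunc_vec: "(\<lambda>n. (cmod (trunc_vec N w n))^2) sums (\<Sum>n<N. (cmod (w n))^2)"
proof -
  have "(\<lambda>n. (cmod (trunc_vec N w n))^2) = (\<lambda>n. if n \<in> {..<N} then (cmod (w n))^2 else 0)"
    by (auto simp: trunc_vec_def)
  then show ?thesis using sums_If_finite_set[of "{..<N}" "\<lambda>n. (cmod (w n))^2"] by simp
qed

lemma l2_trunc_vec: "l2 (trunc_vec N w)"
  unfolding l2_def using sums_norm2_trunc_vec by (rule sums_summable)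

lemma l2norm2_trunc_vec: "l2norm2 (trunc_vec N w) = (\<Sum>n<N. (cmod (w n))^2)"
  unfolding l2norm2_def using sums_norm2_trunc_vec by (rule sums_unique[symmetric])

lemma sums_mult_trunc_vec: "(\<lambda>j. f j * trunc_vec N g j) sums (\<Sum>j<N. f j * g j)"
proof -
  have "(\<lambda>j. f j * trunc_vec N g j) = (\<lambda>j. if j \<in> {..<N} then f j * g j else 0)"
    by (auto simp: trunc_vec_def)
  then show ?thesis using sums_If_finite_set[of "{..<N}" "\<lambda>j. f j * g j"] by simp
qed

lemma app_trunc_vec: "app M (trunc_vec N u) = (\<lambda>i. \<Sum>k<N. M i k * u k)"
proof
  fix i
  have "(\<Sum>k. M i k * trunc_vec N u k) = (\<Sum>k<N. M i k * trunc_vec N u k)"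
    by (rule suminf_finite) (auto simp: trunc_vec_def)
  also have "\<dots> = (\<Sum>k<N. M i k * u k)" by (rule sum.cong) (auto simp: trunc_vec_def)
  finally show "app M (trunc_vec N u) i = (\<Sum>k<N. M i k * u k)" unfolding app_def .
qed

lemma l2norm2_nonneg: "l2 u \<Longrightarrow> 0 \<le> l2norm2 u"
  unfolding l2_def l2norm2_def by (simp add: suminf_nonneg)

lemma norm2_le_l2norm2: "l2 u \<Longrightarrow> (cmod (u n))^2 \<le> l2norm2 u"
  unfolding l2_def l2norm2_def using sum_le_suminf[of "\<lambda>n. (cmod (u n))^2" "{n}"] by auto

lemma l2norm2_tail_tendsto_zero:
  assumes "l2 u"
  shows "(\<lambda>N. l2norm2 (\<lambda>n. u n - trunc_vec N u n)) \<longlonglongrightarrow> 0"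
proof -
  have su: "summable (\<lambda>n. (cmod (u n))^2)" using assms unfolding l2_def .
  have "(\<lambda>n. (cmod (u n - trunc_vec N u n))^2) = (\<lambda>n. (cmod (u n))^2 - (cmod (trunc_vec N u n))^2)" for N
    by (auto simp: trunc_vec_def)
  then have "l2norm2 (\<lambda>n. u n - trunc_vec N u n) = (\<Sum>n. (cmod (u n))^2) - (\<Sum>n<N. (cmod (u n))^2)" for N
    unfolding l2norm2_def using sums_diff[OF summable_sums[OF su] sums_norm2_trunc_vec]
    by (simp add: sums_iff)
  moreover have "(\<lambda>N. (\<Sum>n. (cmod (u n))^2) - (\<Sum>n<N. (cmod (u n))^2)) \<longlonglongrightarrow> 0"
    using tendsto_diff[OF tendsto_const[of "\<Sum>n. (cmod (u n))^2"] summable_LIMSEQ[OF su]] by simp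
  ultimately show ?thesis by simp
qed

lemma ip_summable_norm:
  assumes "l2 u" "l2 v"
  shows "summable (\<lambda>n. cmod (cnj (v n) * u n))"
proof (rule summable_comparison_test)
  show "\<exists>N. \<forall>n\<ge>N. norm (cmod (cnj (v n) * u n)) \<le> ((cmod (v n))^2 + (cmod (u n))^2) / 2"
  proof (intro exI allI impI)
    fix n
    show "norm (cmod (cnj (v n) * u n)) \<le> ((cmod (v n))^2 + (cmod (u n))^2) / 2"
      using sum_squares_bound[of "cmod (v n)" "cmod (u n)"] by (simp add: norm_mult)
  qed
  show "summable (\<lambda>n. ((cmod (v n))^2 + (cmod (u n))^2) / 2)"
    using assms unfolding l2_def by (intro summable_divide summable_add)
qed

lemma ip_summable: "l2 u \<Longrightarrow> l2 v \<Longrightarrow> summable (\<lambda>n. cnj (v n) * u n)"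
  by (rule summable_norm_cancel) (rule ip_summable_norm)

lemma ip_sums: "l2 u \<Longrightarrow> l2 v \<Longrightarrow> (\<lambda>n. cnj (v n) * u n) sums ip v u"
  unfolding ip_def by (intro summable_sums ip_summable)

lemma cnj_mult_self: "cnj z * z = complex_of_real ((cmod z)^2)"
  by (metis complex_norm_square mult.commute)

lemma ip_self: "l2 u \<Longrightarrow> ip u u = of_real (l2norm2 u)"
  unfolding ip_def cnj_mult_self l2_def l2norm2_def by (rule suminf_of_real[symmetric])

lemma ip_Cauchy_Schwarz:
  assumes "l2 u" "l2 v"
  shows "(cmod (ip v u))^2 \<le> l2norm2 v * l2norm2 u"
proof -
  let ?a = "\<lambda>n. cmod (v n)" and ?b = "\<lambda>n. cmod (u n)"
  have sq: "summable (\<lambda>n. (?a n)^2)" "summable (\<lambda>n. (?b n)^2)" using assms unfolding l2_def by auto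
  have partial: "(\<Sum>n<N. ?a n * ?b n) \<le> sqrt (l2norm2 v * l2norm2 u)" for N
  proof -
    have "(\<Sum>n<N. ?a n * ?b n)^2 \<le> (\<Sum>n<N. (?a n)^2) * (\<Sum>n<N. (?b n)^2)"
      by (rule Cauchy_Schwarz_ineq_sum)
    also have "\<dots> \<le> l2norm2 v * l2norm2 u"
      unfolding l2norm2_def
      by (intro mult_mono sum_le_suminf sq) (auto intro: sum_nonneg suminf_nonneg sq)
    finally show ?thesis by (simp add: real_le_rsqrt)
  qed
  have "cmod (ip v u) \<le> (\<Sum>n. cmod (cnj (v n) * u n))"
    unfolding ip_def using ip_summable_norm[OF assms] by (rule summable_norm)
  also have "\<dots> = (\<Sum>n. ?a n * ?b n)" by (simp add: norm_mult)
  also have "\<dots> \<le> sqrt (l2norm2 v * l2norm2 u)"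
    using ip_summable_norm[OF assms] partial by (intro suminf_le_const) (auto simp: norm_mult)
  finally have "(cmod (ip v u))^2 \<le> (sqrt (l2norm2 v * l2norm2 u))^2"
    by (simp add: power_mono)
  also have "\<dots> = l2norm2 v * l2norm2 u" using assms l2norm2_nonneg by simp
  finally show ?thesis .
qed

lemma norm_add_squared_le: "(cmod (a + b))^2 \<le> 2 * (cmod a)^2 + 2 * (cmod b)^2"
proof -
  have "(cmod (a + b))^2 \<le> (cmod a + cmod b)^2" by (intro power_mono norm_triangle_ineq) simp
  then show ?thesis using sum_squares_bound[of "cmod a" "cmod b"] by (simp add: power2_sum)
qed

lemma l2_lincomb:
  assumes "l2 u" "l2 w"
  shows "l2 (\<lambda>n. a * u n + b * w n)"
    and "l2norm2 (\<lambda>n. a * u n + b * w n) \<le> 2 * (cmod a)^2 * l2norm2 u + 2 * (cmod b)^2 * l2norm2 w"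
proof -
  define bound where "bound n = 2 * (cmod a)^2 * (cmod (u n))^2 + 2 * (cmod b)^2 * (cmod (w n))^2" for n
  have le: "(cmod (a * u n + b * w n))^2 \<le> bound n" for n
    using norm_add_squared_le[of "a * u n" "b * w n"] by (simp add: bound_def norm_mult power_mult_distrib)
  have sums: "bound sums (2 * (cmod a)^2 * l2norm2 u + 2 * (cmod b)^2 * l2norm2 w)"
    using assms unfolding bound_def l2_def l2norm2_def by (intro sums_add sums_mult summable_sums)
  show l: "l2 (\<lambda>n. a * u n + b * w n)" unfolding l2_def
    by (rule summable_comparison_test[OF _ sums_summable[OF sums]]) (use le in auto)
  show "l2norm2 (\<lambda>n. a * u n + b * w n) \<le> 2 * (cmod a)^2 * l2norm2 u + 2 * (cmod b)^2 * l2norm2 w"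
    unfolding sums_unique[OF sums] l2norm2_def[of "\<lambda>n. a * u n + b * w n"]
    using l le sums unfolding l2_def by (intro suminf_le) (auto simp: sums_iff)
qed

lemma l2_diff: "l2 u \<Longrightarrow> l2 w \<Longrightarrow> l2 (\<lambda>n. u n - w n)"
  using l2_lincomb(1)[of u w 1 "-1"] by simp

lemma ip_diff_right: "l2 a \<Longrightarrow> l2 b \<Longrightarrow> l2 v \<Longrightarrow> ip v (\<lambda>n. a n - b n) = ip v a - ip v b"
  unfolding ip_def by (simp add: right_diff_distrib suminf_diff ip_summable)

lemma bdd_op_bound:
  assumes "bdd_op M"
  obtains C where "0 \<le> C" and "\<And>u. l2 u \<Longrightarrow> l2norm2 (app M u) \<le> C * l2norm2 u"
proof -
  obtain C where C: "\<And>u. l2 u \<Longrightarrow> l2 (app M u) \<and> l2norm2 (app M u) \<le> C * l2norm2 u"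
    using assms unfolding bdd_op_def by blast
  have "0 \<le> l2norm2 (app M (basis_vec 1 0))" using C l2_basis_vec l2norm2_nonneg by blast
  also have "\<dots> \<le> C" using C[OF l2_basis_vec, of 1 0] by (simp add: l2norm2_basis_vec)
  finally show ?thesis using that C by blast
qed

lemma bdd_op_app_l2: "bdd_op M \<Longrightarrow> l2 u \<Longrightarrow> l2 (app M u)"
  unfolding bdd_op_def by blast

lemma bdd_op_row_summable: "bdd_op M \<Longrightarrow> l2 u \<Longrightarrow> summable (\<lambda>j. M i j * u j)"
  unfolding bdd_op_def by blast

lemma bdd_op_column_l2: "bdd_op M \<Longrightarrow> l2 (\<lambda>i. M i j)"
  using bdd_op_app_l2[OF _ l2_basis_vec, of M 1 j] by (simp add: app_basis_vec)

lemma bdd_op_entry_bound: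
  assumes "bdd_op M"
  obtains C where "\<And>i j. cmod (M i j) \<le> C"
proof -
  obtain C where C: "\<And>u. l2 u \<Longrightarrow> l2norm2 (app M u) \<le> C * l2norm2 u"
    using bdd_op_bound[OF assms] by blast
  have "(cmod (M i j))^2 \<le> C" for i j
  proof -
    have "(cmod (M i j))^2 \<le> l2norm2 (app M (basis_vec 1 j))"
      using norm2_le_l2norm2[OF bdd_op_column_l2[OF assms]] by (simp add: app_basis_vec)
    also have "\<dots> \<le> C" using C[OF l2_basis_vec, of 1 j] by (simp add: l2norm2_basis_vec)
    finally show ?thesis .
  qed
  then show ?thesis using that[of "sqrt C"] by (metis norm_ge_zero real_le_rsqrt)
qed

lemma app_lincomb:
  assumes "bdd_op M" "l2 u" "l2 w"
  shows "app M (\<lambda>n. a * u n + b * w n) = (\<lambda>i. a * app M u i + b * app M w i)"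
proof
  fix i
  have "(\<lambda>j. a * (M i j * u j) + b * (M i j * w j)) sums (a * app M u i + b * app M w i)"
    unfolding app_def using assms by (intro sums_add sums_mult summable_sums bdd_op_row_summable)
  then show "app M (\<lambda>n. a * u n + b * w n) i = a * app M u i + b * app M w i"
    unfolding app_def[of M "\<lambda>n. a * u n + b * w n"] by (simp add: sums_iff algebra_simps)
qed

lemma app_lincomb_op:
  assumes "bdd_op x" "bdd_op y" "l2 u"
  shows "app (\<lambda>i j. a * x i j + b * y i j) u = (\<lambda>i. a * app x u i + b * app y u i)"
proof
  fix i
  have "(\<lambda>j. a * (x i j * u j) + b * (y i j * u j)) sums (a * app x u i + b * app y u i)"
    unfolding app_def using assms by (intro sums_add sums_mult summable_sums bdd_op_row_summable)
  then show "app (\<lambda>i j. a * x i j + b * y i j) u i = a * app x u i + b * app y u i"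
    unfolding app_def[of "\<lambda>i j. a * x i j + b * y i j"] by (simp add: sums_iff algebra_simps)
qed

lemma bdd_op_lincomb:
  assumes x: "bdd_op x" and y: "bdd_op y"
  shows "bdd_op (\<lambda>i j. a * x i j + b * y i j)"
proof -
  obtain Cx where Cx: "0 \<le> Cx" "\<And>w. l2 w \<Longrightarrow> l2norm2 (app x w) \<le> Cx * l2norm2 w"
    using bdd_op_bound[OF x] by blast
  obtain Cy where Cy: "0 \<le> Cy" "\<And>w. l2 w \<Longrightarrow> l2norm2 (app y w) \<le> Cy * l2norm2 w"
    using bdd_op_bound[OF y] by blast
  let ?M = "\<lambda>i j. a * x i j + b * y i j"
  have "(\<forall>i. summable (\<lambda>j. ?M i j * u j)) \<and> l2 (app ?M u)
     \<and> l2norm2 (app ?M u) \<le> (2 * (cmod a)^2 * Cx + 2 * (cmod b)^2 * Cy) * l2norm2 u"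
    if u: "l2 u" for u
  proof (intro conjI allI)
    show "summable (\<lambda>j. ?M i j * u j)" for i
      using summable_add[OF summable_mult[OF bdd_op_row_summable[OF x u]] summable_mult[OF bdd_op_row_summable[OF y u]]]
      by (simp add: algebra_simps)
    have lx: "l2 (app x u)" "l2 (app y u)" using bdd_op_app_l2 x y u by auto
    show "l2 (app ?M u)" unfolding app_lincomb_op[OF x y u] by (rule l2_lincomb(1)[OF lx])
    have "l2norm2 (app ?M u) \<le> 2 * (cmod a)^2 * l2norm2 (app x u) + 2 * (cmod b)^2 * l2norm2 (app y u)"
      unfolding app_lincomb_op[OF x y u] by (rule l2_lincomb(2)[OF lx])
    also have "\<dots> \<le> 2 * (cmod a)^2 * (Cx * l2norm2 u) + 2 * (cmod b)^2 * (Cy * l2norm2 u)"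
      by (intro add_mono mult_left_mono Cx(2) Cy(2) u) auto
    finally show "l2norm2 (app ?M u) \<le> (2 * (cmod a)^2 * Cx + 2 * (cmod b)^2 * Cy) * l2norm2 u"
      by (simp add: algebra_simps)
  qed
  then show ?thesis unfolding bdd_op_def by blast
qed

lemma app_idm: "app idm u = u"
proof
  fix i
  have "(\<lambda>j. idm i j * u j) = (\<lambda>j. if j = i then u i else 0)" by (auto simp: idm_def)
  then show "app idm u i = u i" unfolding app_def using sums_single[of i "\<lambda>_. u i"] by (simp add: sums_iff)
qed

lemma bdd_op_idm: "bdd_op idm"
  unfolding bdd_op_def
proof (intro exI[of _ 1] allI impI conjI)
  fix u :: vec and i assume "l2 u"
  have "(\<lambda>j. idm i j * u j) = (\<lambda>j. if j = i then u i else 0)" by (auto simp: idm_def)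
  then show "summable (\<lambda>j. idm i j * u j)" using sums_single[of i "\<lambda>_. u i"] sums_summable by simp
qed (simp_all add: app_idm)

lemma ip_app_trunc_vec_tendsto:
  assumes M: "bdd_op M" and u: "l2 u" and v: "l2 v"
  shows "(\<lambda>N. ip v (app M (trunc_vec N u))) \<longlonglongrightarrow> ip v (app M u)"
proof -
  obtain C where C: "\<And>w. l2 w \<Longrightarrow> l2norm2 (app M w) \<le> C * l2norm2 w"
    using bdd_op_bound[OF M] by blast
  define tail where "tail N = (\<lambda>n. u n - trunc_vec N u n)" for N
  have tail: "l2 (tail N)" for N unfolding tail_def by (rule l2_diff[OF u l2_trunc_vec])
  have "ip v (app M u) - ip v (app M (trunc_vec N u)) = ip v (app M (tail N))" for N
    unfolding tail_def app_lincomb[OF M u l2_trunc_vec, of 1 "-1", simplified]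
    using ip_diff_right[OF bdd_op_app_l2[OF M u] bdd_op_app_l2[OF M l2_trunc_vec] v] by simp
  moreover have "(cmod (ip v (app M (tail N))))^2 \<le> l2norm2 v * (C * l2norm2 (tail N))" for N
    using ip_Cauchy_Schwarz[OF bdd_op_app_l2[OF M tail] v] C[OF tail] l2norm2_nonneg[OF v]
    by (meson mult_left_mono order_trans)
  ultimately have bound: "norm (ip v (app M u) - ip v (app M (trunc_vec N u))) \<le> sqrt (l2norm2 v * (C * l2norm2 (tail N)))" for N
    by (simp add: real_le_rsqrt)
  have "(\<lambda>N. sqrt (l2norm2 v * (C * l2norm2 (tail N)))) \<longlonglongrightarrow> sqrt (l2norm2 v * (C * 0))"
    unfolding tail_def by (intro tendsto_intros l2norm2_tail_tendsto_zero u)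
  then have "(\<lambda>N. ip v (app M u) - ip v (app M (trunc_vec N u))) \<longlonglongrightarrow> 0"
    by (intro Lim_null_comparison[OF always_eventually[OF allI[OF bound]]]) simp
  from tendsto_diff[OF tendsto_const[of "ip v (app M u)"] this] show ?thesis by simp
qed

lemma app_adj: "app (adj M) v j = (\<Sum>i. cnj (M i j) * v i)"
  unfolding app_def adj_def ..

lemma cnj_app_adj:
  assumes "bdd_op M" "l2 v"
  shows "cnj (app (adj M) v j) = ip v (\<lambda>i. M i j)"
proof -
  have "(\<lambda>i. cnj (cnj (v i) * M i j)) sums cnj (ip v (\<lambda>i. M i j))"
    using ip_sums[OF bdd_op_column_l2[OF assms(1)] assms(2)] by (simp only: sums_cnj)
  then have "app (adj M) v j = cnj (ip v (\<lambda>i. M i j))"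
    unfolding app_adj by (simp add: sums_iff mult.commute)
  then show ?thesis by simp
qed

text \<open>\<open>\<langle>v, M u\<rangle> = \<langle>M\<^sup>* v, u\<rangle>\<close>, with \<open>M\<^sup>*\<close> the conjugate transpose: the two summations can be
  exchanged on truncations of \<open>u\<close>, and boundedness of \<open>M\<close> passes to the limit.\<close>
lemma sums_ip_app_adj:
  assumes M: "bdd_op M" and u: "l2 u" and v: "l2 v"
  shows "(\<lambda>j. cnj (app (adj M) v j) * u j) sums ip v (app M u)"
proof -
  have partial: "(\<Sum>j<N. cnj (app (adj M) v j) * u j) = ip v (app M (trunc_vec N u))" for N
  proof -
    have "(\<lambda>i. \<Sum>k<N. cnj (v i) * M i k * u k) sums (\<Sum>k<N. cnj (app (adj M) v k) * u k)"
      unfolding cnj_app_adj[OF M v]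
      by (intro sums_sum sums_mult2 ip_sums[OF bdd_op_column_l2[OF M] v])
    then show ?thesis
      unfolding ip_def app_trunc_vec by (simp add: sums_iff sum_distrib_left mult.assoc)
  qed
  show ?thesis unfolding sums_def partial by (rule ip_app_trunc_vec_tendsto[OF M u v])
qed

lemma ip_app_trunc_vec_adj:
  assumes M: "bdd_op M" and u: "l2 u"
  shows "ip u (app M (trunc_vec N (app (adj M) u))) = of_real (\<Sum>n<N. (cmod (app (adj M) u n))^2)"
  using sums_unique2[OF sums_ip_app_adj[OF M l2_trunc_vec u] sums_mult_trunc_vec]
  by (simp only: cnj_mult_self of_real_sum)

lemma bdd_op_adj:
  assumes M: "bdd_op M"
  shows "bdd_op (adj M)"
proof -
  obtain C where C: "0 \<le> C" "\<And>w. l2 w \<Longrightarrow> l2norm2 (app M w) \<le> C * l2norm2 w"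
    using bdd_op_bound[OF M] by blast
  have "(\<forall>i. summable (\<lambda>j. adj M i j * u j)) \<and> l2 (app (adj M) u) \<and> l2norm2 (app (adj M) u) \<le> C * l2norm2 u"
    if u: "l2 u" for u
  proof (intro conjI allI)
    show "summable (\<lambda>j. adj M i j * u j)" for i
      unfolding adj_def by (rule ip_summable[OF u bdd_op_column_l2[OF M]])
    define w where "w = app (adj M) u"
    have partial: "(\<Sum>n<N. (cmod (w n))^2) \<le> C * l2norm2 u" for N
    proof -
      define S where "S = (\<Sum>n<N. (cmod (w n))^2)"
      have S: "0 \<le> S" unfolding S_def by (simp add: sum_nonneg)
      have "ip u (app M (trunc_vec N w)) = of_real S"
        unfolding S_def w_def by (rule ip_app_trunc_vec_adj[OF M u])
      then have "S^2 = (cmod (ip u (app M (trunc_vec N w))))^2" using S by simp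
      also have "\<dots> \<le> l2norm2 u * l2norm2 (app M (trunc_vec N w))"
        by (rule ip_Cauchy_Schwarz[OF bdd_op_app_l2[OF M l2_trunc_vec] u])
      also have "\<dots> \<le> l2norm2 u * (C * S)"
        unfolding S_def l2norm2_trunc_vec[symmetric]
        by (rule mult_left_mono[OF C(2)[OF l2_trunc_vec] l2norm2_nonneg[OF u]])
      finally have "S * S \<le> (C * l2norm2 u) * S" by (simp add: power2_eq_square algebra_simps)
      then show ?thesis
        using S C(1) l2norm2_nonneg[OF u] unfolding S_def[symmetric]
        by (cases "S = 0") (auto intro: mult_right_le_imp_le)
    qed
    have sw: "summable (\<lambda>n. (cmod (w n))^2)"
      by (rule summableI_nonneg_bounded[OF _ partial]) simp
    then show "l2 (app (adj M) u)" unfolding w_def l2_def .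
    show "l2norm2 (app (adj M) u) \<le> C * l2norm2 u"
      unfolding w_def[symmetric] l2norm2_def[of w] by (rule suminf_le_const[OF sw partial])
  qed
  then show ?thesis unfolding bdd_op_def by blast
qed

lemma sums_mmult_app:
  assumes A: "bdd_op A" and B: "bdd_op B" and u: "l2 u"
  shows "(\<lambda>j. mmult A B i j * u j) sums app A (app B u) i"
proof -
  define a where "a = (\<lambda>k. cnj (A i k))"
  have "a = app (adj A) (basis_vec 1 i)" unfolding a_def by (simp add: app_basis_vec adj_def)
  then have a: "l2 a" using bdd_op_app_l2[OF bdd_op_adj[OF A] l2_basis_vec] by simp
  have "cnj (app (adj B) a j) = mmult A B i j" for j
  proof -
    have "cnj (app (adj B) a j) = ip a (\<lambda>k. B k j)" by (rule cnj_app_adj[OF B a])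
    also have "\<dots> = mmult A B i j" unfolding ip_def mmult_def a_def by simp
    finally show ?thesis .
  qed
  moreover have "ip a (app B u) = app A (app B u) i" unfolding ip_def app_def[of A] a_def by simp
  ultimately show ?thesis using sums_ip_app_adj[OF B u a] by simp
qed

lemma app_mmult: "bdd_op A \<Longrightarrow> bdd_op B \<Longrightarrow> l2 u \<Longrightarrow> app (mmult A B) u = app A (app B u)"
  unfolding app_def[of "mmult A B"] using sums_mmult_app by (auto simp: sums_iff)

lemma bdd_op_mmult:
  assumes A: "bdd_op A" and B: "bdd_op B"
  shows "bdd_op (mmult A B)"
proof -
  obtain CA where CA: "0 \<le> CA" "\<And>w. l2 w \<Longrightarrow> l2norm2 (app A w) \<le> CA * l2norm2 w"
    using bdd_op_bound[OF A] by blast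
  obtain CB where CB: "\<And>w. l2 w \<Longrightarrow> l2norm2 (app B w) \<le> CB * l2norm2 w"
    using bdd_op_bound[OF B] by blast
  have "(\<forall>i. summable (\<lambda>j. mmult A B i j * u j)) \<and> l2 (app (mmult A B) u)
      \<and> l2norm2 (app (mmult A B) u) \<le> (CA * CB) * l2norm2 u"
    if u: "l2 u" for u
  proof (intro conjI allI)
    show "summable (\<lambda>j. mmult A B i j * u j)" for i
      using sums_mmult_app[OF A B u] by (rule sums_summable)
    have Bu: "l2 (app B u)" by (rule bdd_op_app_l2[OF B u])
    show "l2 (app (mmult A B) u)" unfolding app_mmult[OF A B u] by (rule bdd_op_app_l2[OF A Bu])
    have "l2norm2 (app A (app B u)) \<le> CA * l2norm2 (app B u)" by (rule CA(2)[OF Bu])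
    also have "\<dots> \<le> CA * (CB * l2norm2 u)" by (rule mult_left_mono[OF CB[OF u] CA(1)])
    finally show "l2norm2 (app (mmult A B) u) \<le> (CA * CB) * l2norm2 u"
      unfolding app_mmult[OF A B u] by (simp add: mult.assoc)
  qed
  then show ?thesis unfolding bdd_op_def by blast
qed

lemma ip_app_hermitian_real:
  assumes h: "bdd_op h" and "adj h = h" and u: "l2 u"
  shows "Im (ip u (app h u)) = 0"
proof -
  have "(\<lambda>j. cnj (cnj (u j) * app h u j)) sums cnj (ip u (app h u))"
    using ip_sums[OF bdd_op_app_l2[OF h u] u] by (simp only: sums_cnj)
  then have "(\<lambda>j. cnj (app h u j) * u j) sums cnj (ip u (app h u))"
    by (simp add: mult.commute)
  moreover have "(\<lambda>j. cnj (app h u j) * u j) sums ip u (app h u)"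
    using sums_ip_app_adj[OF h u u] unfolding \<open>adj h = h\<close> .
  ultimately have "cnj (ip u (app h u)) = ip u (app h u)" by (rule sums_unique2)
  then show ?thesis by (simp add: complex_eq_iff)
qed

lemma ip_two_basis_vecs: "ip (\<lambda>n. basis_vec a i n + basis_vec b j n) w = cnj a * w i + cnj b * w j"
proof -
  have "(\<lambda>n. cnj (basis_vec a i n + basis_vec b j n) * w n)
      = (\<lambda>n. w n * basis_vec (cnj a) i n + w n * basis_vec (cnj b) j n)"
    by (auto simp: basis_vec_def algebra_simps)
  then show ?thesis
    unfolding ip_def using sums_add[OF sums_mult_basis_vec sums_mult_basis_vec, of w "cnj a" i w "cnj b" j]
    by (simp add: sums_iff mult.commute)
qed

lemma app_two_basis_vecs: "app M (\<lambda>n. basis_vec a i n + basis_vec b j n) = (\<lambda>k. M k i * a + M k j * b)"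
proof
  fix k
  have "(\<lambda>n. M k n * basis_vec a i n + M k n * basis_vec b j n) sums (M k i * a + M k j * b)"
    by (intro sums_add sums_mult_basis_vec)
  then show "app M (\<lambda>n. basis_vec a i n + basis_vec b j n) k = M k i * a + M k j * b"
    unfolding app_def by (simp add: sums_iff distrib_left)
qed

lemma positive_op_diag:
  assumes "positive_op M"
  shows "Im (M i i) = 0" and "0 \<le> Re (M i i)"
  using assms l2_basis_vec[of 1 i] unfolding positive_op_def by (auto simp: ip_basis_vec app_basis_vec)

text \<open>Testing positivity on the vectors \<open>a e\<^sub>i + e\<^sub>j\<close>.\<close>
lemma positive_op_two_point:
  assumes "positive_op M"
  shows "Im (cnj a * (M i i * a + M i j) + (M j i * a + M j j)) = 0"
    and "0 \<le> Re (cnj a * (M i i * a + M i j) + (M j i * a + M j j))"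
proof -
  have "l2 (\<lambda>n. basis_vec a i n + basis_vec 1 j n)"
    using l2_lincomb(1)[OF l2_basis_vec l2_basis_vec, of 1 a i 1 1 j] by simp
  then show "Im (cnj a * (M i i * a + M i j) + (M j i * a + M j j)) = 0"
    "0 \<le> Re (cnj a * (M i i * a + M i j) + (M j i * a + M j j))"
    using assms unfolding positive_op_def by (auto simp: ip_two_basis_vecs app_two_basis_vecs)
qed

lemma positive_op_hermitian:
  assumes "positive_op M"
  shows "M j i = cnj (M i j)"
proof (cases "i = j")
  case True
  then show ?thesis using positive_op_diag(1)[OF assms, of i] by (simp add: complex_eq_iff)
next
  case False
  have diag: "Im (M i i) = 0" "Im (M j j) = 0" using positive_op_diag[OF assms] by auto
  have "Im (M i j + M j i) = 0"
    using positive_op_two_point(1)[OF assms, of 1 i j] diag by simp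
  moreover have "Re (M j i - M i j) = 0"
    using positive_op_two_point(1)[OF assms, of \<i> i j] diag by (simp add: algebra_simps)
  ultimately show ?thesis by (simp add: complex_eq_iff)
qed

lemma positive_op_zero_diag:
  assumes M: "positive_op M" and "M i i = 0"
  shows "M i j = 0"
proof (rule ccontr)
  assume ne: "M i j \<noteq> 0"
  then have "i \<noteq> j" using assms by auto
  define c where "c = (Re (M j j) + 1) / (2 * (cmod (M i j))^2)"
  define a where "a = - complex_of_real c * M i j"
  have "0 \<le> Re (cnj a * (M i i * a + M i j) + (M j i * a + M j j))"
    by (rule positive_op_two_point(2)[OF M])
  also have "\<dots> = - 2 * c * (cmod (M i j))^2 + Re (M j j)"
  proof -
    have "cmod (M i j) * cmod (M i j) = Re (M i j) * Re (M i j) + Im (M i j) * Im (M i j)"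
      using cmod_power2[of "M i j"] by (simp add: power2_eq_square)
    then show ?thesis
      unfolding a_def positive_op_hermitian[OF M, of j i] using \<open>M i i = 0\<close>
      by (simp add: algebra_simps power2_eq_square)
  qed
  also have "\<dots> = -1" unfolding c_def using ne by (simp add: field_simps)
  finally show False by simp
qed

lemma ip_scalar_plus:
  assumes h: "bdd_op h" and u: "l2 u"
  shows "ip u (app (\<lambda>i j. a * idm i j + b * h i j) u) = a * of_real (l2norm2 u) + b * ip u (app h u)"
proof -
  have "(\<lambda>n. a * (cnj (u n) * u n) + b * (cnj (u n) * app h u n)) sums (a * ip u u + b * ip u (app h u))"
    by (intro sums_add sums_mult ip_sums u bdd_op_app_l2[OF h u])
  then show ?thesis
    unfolding app_lincomb_op[OF bdd_op_idm h u] app_idm ip_def[of u "\<lambda>i. a * u i + b * app h u i"] ip_self[OF u]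
    by (simp add: sums_iff algebra_simps)
qed

lemma positive_op_scalar: "0 \<le> c \<Longrightarrow> positive_op (\<lambda>i j. of_real c * idm i j)"
  using ip_scalar_plus[OF bdd_op_idm, of _ "of_real c" 0] bdd_op_lincomb[OF bdd_op_idm bdd_op_idm, of "of_real c" 0]
  unfolding positive_op_def by (simp add: l2norm2_nonneg)

lemma positive_op_idm: "positive_op idm"
  using positive_op_scalar[of 1] by simp

lemma hermitian_shift_positive:
  assumes h: "bdd_op h" and "adj h = h"
  obtains c where "0 \<le> c" and "positive_op (\<lambda>i j. of_real c * idm i j + h i j)"
proof -
  obtain C where C: "0 \<le> C" "\<And>w. l2 w \<Longrightarrow> l2norm2 (app h w) \<le> C * l2norm2 w"
    using bdd_op_bound[OF h] by blast
  define c where "c = sqrt C"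
  have "Im (ip u (app (\<lambda>i j. of_real c * idm i j + h i j) u)) = 0 \<and>
        0 \<le> Re (ip u (app (\<lambda>i j. of_real c * idm i j + h i j) u))" if u: "l2 u" for u
  proof -
    have "(cmod (ip u (app h u)))^2 \<le> l2norm2 u * (C * l2norm2 u)"
      using ip_Cauchy_Schwarz[OF bdd_op_app_l2[OF h u] u] C(2)[OF u] l2norm2_nonneg[OF u]
      by (meson mult_left_mono order_trans)
    also have "\<dots> = (c * l2norm2 u)^2" unfolding c_def using C(1) by (simp add: power2_eq_square)
    finally have "cmod (ip u (app h u)) \<le> c * l2norm2 u"
      by (rule power2_le_imp_le) (use C(1) l2norm2_nonneg[OF u] in \<open>simp add: c_def\<close>)
    then show ?thesis
      using ip_scalar_plus[OF h u, of "of_real c" 1] ip_app_hermitian_real[OF assms u] abs_Re_le_cmod[of "ip u (app h u)"]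
      by simp
  qed
  moreover have "bdd_op (\<lambda>i j. of_real c * idm i j + h i j)"
    using bdd_op_lincomb[OF bdd_op_idm h, of "of_real c" 1] by simp
  ultimately show ?thesis using that[of c] C(1) unfolding c_def positive_op_def by auto
qed

section \<open>Scalar linear equations in integral form\<close>

lemma has_vector_derivative_exp_of_real_mult:
  "((\<lambda>t. exp (complex_of_real t * c)) has_vector_derivative (c * exp (complex_of_real t * c))) (at t within S)"
  using exp_scaleR_has_vector_derivative_right[of c t S] by (simp add: scaleR_conv_of_real mult.commute)

text \<open>\<open>f\<close> solves \<open>f' = c f + h\<close>, \<open>f 0 = f\<^sub>0\<close> in the sense of variation of constants.\<close>
locale mild_solution =
  fixes f h :: "real \<Rightarrow> complex" and c f\<^sub>0 :: complex
  assumes mild: "\<And>t. 0 \<le> t \<Longrightarrow>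
    ((\<lambda>s. exp (complex_of_real (t - s) * c) * h s) has_integral (f t - exp (complex_of_real t * c) * f\<^sub>0)) {0..t}"
begin

definition damped_forcing :: "real \<Rightarrow> complex" where
  "damped_forcing s = exp (- (complex_of_real s * c)) * h s"

lemma damped_forcing_has_integral:
  assumes "0 \<le> t"
  shows "(damped_forcing has_integral (exp (- (complex_of_real t * c)) * f t - f\<^sub>0)) {0..t}"
proof -
  have "exp (- (complex_of_real t * c)) * (exp (complex_of_real (t - s) * c) * h s) = damped_forcing s" for s
  proof -
    have "exp (- (complex_of_real t * c)) * exp (complex_of_real (t - s) * c) = exp (- (complex_of_real s * c))"
      by (simp add: exp_add[symmetric] algebra_simps)
    then show ?thesis unfolding damped_forcing_def by (simp add: mult.assoc[symmetric])
  qed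
  moreover have "exp (- (complex_of_real t * c)) * (f t - exp (complex_of_real t * c) * f\<^sub>0)
      = exp (- (complex_of_real t * c)) * f t - f\<^sub>0"
    by (simp add: algebra_simps exp_minus field_simps)
  ultimately show ?thesis using has_integral_mult_right[OF mild[OF assms], of "exp (- (complex_of_real t * c))"]
    by simp
qed

lemma variation_of_constants:
  assumes "0 \<le> t"
  shows "f t = exp (complex_of_real t * c) * (f\<^sub>0 + integral {0..t} damped_forcing)"
  using integral_unique[OF damped_forcing_has_integral[OF assms]] by (simp add: exp_minus field_simps)

lemma initial_value: "f 0 = f\<^sub>0"
  using variation_of_constants[of 0] by simp

lemma continuous_on_solution: "continuous_on {0..T} f"
proof -
  have "continuous_on {0..T} (\<lambda>t. integral {0..t} damped_forcing)"
  proof (cases "0 \<le> T")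
    case True
    then show ?thesis
      using damped_forcing_has_integral[OF True] by (intro indefinite_integral_continuous_1) blast
  qed simp
  then have "continuous_on {0..T} (\<lambda>t. exp (complex_of_real t * c) * (f\<^sub>0 + integral {0..t} damped_forcing))"
    by (intro continuous_intros)
  then show ?thesis by (rule continuous_on_eq) (auto simp: variation_of_constants)
qed

lemma has_integral_differential_form:
  assumes h: "continuous_on {0..T} h" and T: "0 \<le> T"
  shows "((\<lambda>s. c * f s + h s) has_integral (f T - f 0)) {0..T}"
proof -
  have forcing: "continuous_on {0..T} damped_forcing"
    unfolding damped_forcing_def by (intro continuous_intros h)
  define F where "F t = exp (complex_of_real t * c) * (f\<^sub>0 + integral {0..t} damped_forcing)" for t
  have "(F has_vector_derivative (c * f t + h t)) (at t within {0..T})" if t: "t \<in> {0..T}" for t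
  proof -
    have "(F has_vector_derivative (exp (complex_of_real t * c) * damped_forcing t
        + c * exp (complex_of_real t * c) * (f\<^sub>0 + integral {0..t} damped_forcing))) (at t within {0..T})"
      unfolding F_def
      by (rule has_vector_derivative_mult[OF has_vector_derivative_exp_of_real_mult
            has_vector_derivative_add[OF has_vector_derivative_const integral_has_vector_derivative[OF forcing t]],
            simplified])
    moreover have "exp (complex_of_real t * c) * damped_forcing t = h t"
      unfolding damped_forcing_def by (simp add: mult.assoc[symmetric] exp_add[symmetric])
    ultimately show ?thesis
      using variation_of_constants[of t] t by (simp add: algebra_simps)
  qed
  then have "((\<lambda>s. c * f s + h s) has_integral (F T - F 0)) {0..T}"
    by (rule fundamental_theorem_of_calculus[OF T])
  moreover have "F T = f T" "F 0 = f 0" unfolding F_def using T by (auto simp: variation_of_constants)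
  ultimately show ?thesis by simp
qed

end

lemma has_integral_norm2_of_primitive:
  fixes f g :: "real \<Rightarrow> complex"
  assumes T: "0 \<le> T" and g: "continuous_on {0..T} g"
    and primitive: "\<And>t. t \<in> {0..T} \<Longrightarrow> (g has_integral (f t - f 0)) {0..t}"
  shows "((\<lambda>s. 2 * Re (cnj (f s) * g s)) has_integral ((cmod (f T))^2 - (cmod (f 0))^2)) {0..T}"
proof -
  define F where "F t = f 0 + integral {0..t} g" for t
  have fF: "f t = F t" if "t \<in> {0..T}" for t
    using integral_unique[OF primitive[OF that]] unfolding F_def by simp
  have D: "(F has_vector_derivative g t) (at t within {0..T})" if "t \<in> {0..T}" for t
    unfolding F_def
    using has_vector_derivative_add[OF has_vector_derivative_const integral_has_vector_derivative[OF g that]]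
    by simp
  have "((\<lambda>t. F t * cnj (g t) + g t * cnj (F t)) has_integral (F T * cnj (F T) - F 0 * cnj (F 0))) {0..T}"
    by (rule fundamental_theorem_of_calculus[OF T has_vector_derivative_mult[OF D has_vector_derivative_cnj[OF D]]])
  from has_integral_Re[OF this]
  have "((\<lambda>t. 2 * Re (cnj (f t) * g t)) has_integral Re (F T * cnj (F T) - F 0 * cnj (F 0))) {0..T}"
    by (rule has_integral_eq[rotated]) (simp add: fF)
  moreover have "Re (F T * cnj (F T) - F 0 * cnj (F 0)) = (cmod (f T))^2 - (cmod (f 0))^2"
    using fF[of T] fF[of 0] T by (simp add: complex_mult_cnj cmod_power2)
  ultimately show ?thesis by simp
qed

section \<open>Geometric growth against polynomial bounds\<close>

lemma no_bounded_geometric_growth: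
  fixes v D :: "nat \<Rightarrow> real"
  assumes q: "1 < q" and v: "\<And>n. 0 < v n" "\<And>n. v n \<le> A * (real n + 1)^2"
    and growth: "\<And>n. q * v n * D n \<le> v (Suc n) * D (Suc n)"
    and D0: "0 < D 0" and bound: "\<And>n. D n \<le> B"
  shows False
proof -
  define c where "c = v 0 * D 0"
  have c: "0 < c" unfolding c_def using v(1) D0 by simp
  have lower: "c * q ^ n \<le> v n * D n" for n
  proof (induction n)
    case (Suc n)
    have "c * q ^ Suc n \<le> q * (v n * D n)"
      using mult_left_mono[OF Suc.IH, of q] q by (simp add: algebra_simps)
    also have "\<dots> \<le> v (Suc n) * D (Suc n)" using growth[of n] by (simp add: mult.assoc)
    finally show ?case .
  qed (simp add: c_def)
  have "filterlim (\<lambda>n. q ^ n / (real n + 1)^2) at_top sequentially"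
    using q by real_asymp
  then have "eventually (\<lambda>n. A * B / c < q ^ n / (real n + 1)^2) sequentially"
    by (simp add: filterlim_at_top_dense)
  then obtain n where n: "A * B / c < q ^ n / (real n + 1)^2"
    unfolding eventually_sequentially by auto
  have "0 < c * q ^ n" using c q by simp
  then have "0 < v n * D n" using lower[of n] by linarith
  then have "0 \<le> B" using v(1)[of n] bound[of n] by (simp add: zero_less_mult_iff)
  have "c * q ^ n \<le> v n * B" using lower[of n] mult_left_mono[OF bound less_imp_le[OF v(1)]] by (rule order_trans)
  also have "\<dots> \<le> A * (real n + 1)^2 * B" by (rule mult_right_mono[OF v(2) \<open>0 \<le> B\<close>])
  finally have "q ^ n / (real n + 1)^2 \<le> A * B / c" using c by (simp add: field_simps)
  with n show False by simp
qed

text \<open>\<open>D\<close> is nonnegative by induction, and a positive term would force geometric growth of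
  \<open>s\<^sub>n\<^sub>+\<^sub>1 D\<^sub>n\<close>.\<close>
lemma bounded_recursive_supersolution_eq_0:
  fixes s D :: "nat \<Rightarrow> real"
  assumes ab: "0 < a" "a < b"
    and s: "s 0 = 0" "\<And>n. 0 < s (Suc n)" "\<And>n. s n \<le> A * (real n + 1)^2"
    and rec: "\<And>n. b * s n * D (n - 1) \<le> a * s (Suc n) * D n"
    and bound: "\<And>n. D n \<le> B"
  shows "D n = 0"
proof -
  have nonneg: "0 \<le> D n" for n
  proof (induction n)
    case 0
    have "0 \<le> a * s 1 * D 0" using rec[of 0] s(1) by simp
    moreover have "0 < a * s 1" using ab s(2)[of 0] by simp
    ultimately show ?case by (auto simp: zero_le_mult_iff)
  next
    case (Suc n)
    have "0 \<le> b * s (Suc n) * D n" using Suc ab s(2)[of n] by simp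
    then have "0 \<le> a * s (Suc (Suc n)) * D (Suc n)" using rec[of "Suc n"] by simp
    moreover have "0 < a * s (Suc (Suc n))" using ab s(2)[of "Suc n"] by simp
    ultimately show ?case by (auto simp: zero_le_mult_iff)
  qed
  have "\<not> 0 < D n"
  proof
    assume pos: "0 < D n"
    have "0 < A * 4" using s(2)[of 0] s(3)[of 1] by simp
    then have A: "0 \<le> A" by (simp add: zero_less_mult_iff)
    show False
    proof (rule no_bounded_geometric_growth[of "b / a" "\<lambda>k. s (Suc (k + n))" "A * (real n + 2)^2" "\<lambda>k. D (k + n)" B])
      show "1 < b / a" using ab by simp
      show "0 < s (Suc (k + n))" for k by (rule s(2))
      show "s (Suc (k + n)) \<le> A * (real n + 2)^2 * (real k + 1)^2" for k
      proof -
        have "(real (Suc (k + n)) + 1)^2 \<le> ((real n + 2) * (real k + 1))^2"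
          by (intro power_mono) (auto simp: algebra_simps)
        from mult_left_mono[OF this A] s(3)[of "Suc (k + n)"] show ?thesis
          by (simp add: power_mult_distrib mult.assoc)
      qed
      show "b / a * s (Suc (k + n)) * D (k + n) \<le> s (Suc (Suc k + n)) * D (Suc k + n)" for k
        using rec[of "Suc (k + n)"] ab by (simp add: field_simps)
      show "0 < D (0 + n)" using pos by simp
      show "D (k + n) \<le> B" for k by (rule bound)
    qed
  qed
  with nonneg[of n] show ?thesis by simp
qed

lemma omega_0 [simp]: "omega r 0 = 0"
  unfolding omega_def by simp

lemma omega_nonneg: "0 \<le> r \<Longrightarrow> 0 \<le> omega r n"
  unfolding omega_def by (cases n) (auto intro!: mult_nonneg_nonneg)

lemma omega_pos: "0 < r \<Longrightarrow> 0 < n \<Longrightarrow> 0 < omega r n"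
  unfolding omega_def by (cases n) (auto intro!: mult_pos_pos)

lemma omega_le_square: "0 \<le> r \<Longrightarrow> omega r n \<le> (1 + r) * (real n)^2"
  unfolding omega_def power2_eq_square
  by (cases n) (auto simp: algebra_simps intro: mult_left_mono[of 1 "real _" r, simplified])

lemma omega_add_le:
  assumes r: "0 \<le> r" and "k \<le> K"
  shows "omega r (n + k) \<le> (1 + r) * (1 + real K)^2 * (real n + 1)^2"
proof -
  have "omega r (n + k) \<le> (1 + r) * (real (n + k))^2" by (rule omega_le_square[OF r])
  also have "\<dots> \<le> (1 + r) * ((1 + real K) * (real n + 1))^2"
  proof (intro mult_left_mono power_mono)
    have "real (n + k) \<le> real n + real K" using \<open>k \<le> K\<close> by simp
    also have "\<dots> \<le> (1 + real K) * (real n + 1)"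
      using mult_nonneg_nonneg[of "real K" "real n"] by (simp add: algebra_simps)
    finally show "real (n + k) \<le> (1 + real K) * (real n + 1)" .
  qed (use r in simp_all)
  finally show ?thesis by (simp add: power_mult_distrib mult.assoc)
qed

lemma Pt_basis_vec:
  "Pt r lam mu zp zm t (basis_vec c j) = basis_vec (exp (complex_of_real t * gdiag r lam mu zp zm j) * c) j"
  unfolding Pt_def basis_vec_def by auto

lemma L1_basis_vec: "L1 r mu (basis_vec c j) = basis_vec (of_real mu * of_real (sqrt (omega r j)) * c) (j - 1)"
  unfolding L1_def annB_def basis_vec_def by (cases j) auto

lemma L2_basis_vec:
  "L2 r lam (basis_vec c j) = basis_vec (of_real lam * of_real (sqrt (omega r (Suc j))) * c) (Suc j)"
  unfolding L2_def creB_def basis_vec_def by (auto split: nat.splits)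

lemma L1_Pt:
  "L1 r mu (Pt r lam mu zp zm t u) n
    = of_real (mu * sqrt (omega r (Suc n))) * exp (of_real t * gdiag r lam mu zp zm (Suc n)) * u (Suc n)"
  unfolding L1_def annB_def Pt_def by (simp add: mult_ac)

lemma L2_Pt_Suc:
  "L2 r lam (Pt r lam mu zp zm t u) (Suc n)
    = of_real (lam * sqrt (omega r (Suc n))) * exp (of_real t * gdiag r lam mu zp zm n) * u n"
  unfolding L2_def creB_def Pt_def by (simp add: mult_ac)

lemma L2_0: "L2 r lam u 0 = 0"
  unfolding L2_def creB_def by simp

definition decay_rate :: "real \<Rightarrow> real \<Rightarrow> real \<Rightarrow> nat \<Rightarrow> real" where
  "decay_rate r lam mu n = lam^2 * omega r (Suc n) + mu^2 * omega r n"

lemma decay_rate_nonneg: "0 \<le> r \<Longrightarrow> 0 \<le> decay_rate r lam mu n"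
  unfolding decay_rate_def by (intro add_nonneg_nonneg mult_nonneg_nonneg omega_nonneg) auto

lemma decay_rate_le: "0 \<le> r \<Longrightarrow> decay_rate r lam mu n \<le> (lam^2 + mu^2) * (1 + r) * (real (Suc n))^2"
proof -
  assume r: "0 \<le> r"
  have "omega r m \<le> (1 + r) * (real (Suc n))^2" if "m \<le> Suc n" for m
  proof -
    have "(real m)^2 \<le> (real (Suc n))^2" using that by (intro power_mono) auto
    with omega_le_square[OF r, of m] r show ?thesis by (smt (verit) mult_left_mono)
  qed
  then have "lam^2 * omega r (Suc n) + mu^2 * omega r n
      \<le> lam^2 * ((1 + r) * (real (Suc n))^2) + mu^2 * ((1 + r) * (real (Suc n))^2)"
    by (intro add_mono mult_left_mono) auto
  then show ?thesis unfolding decay_rate_def by (simp add: algebra_simps)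
qed

lemma cnj_gdiag_add_gdiag:
  "cnj (gdiag r lam mu zp zm n) + gdiag r lam mu zp zm n = - of_real (decay_rate r lam mu n)"
  unfolding gdiag_def decay_rate_def by (simp add: complex_eq_iff)

lemma cnj_exp_mult_exp: "cnj (exp (of_real t * a)) * exp (of_real t * b) = exp (of_real t * (cnj a + b))"
  by (simp add: exp_cnj exp_add[symmetric] distrib_left)

lemma norm2_exp_gdiag:
  "cnj (exp (of_real t * gdiag r lam mu zp zm n)) * exp (of_real t * gdiag r lam mu zp zm n)
    = of_real (exp (- t * decay_rate r lam mu n))"
  unfolding cnj_exp_mult_exp cnj_gdiag_add_gdiag by (simp flip: exp_of_real)

lemma Re_gdiag: "Re (gdiag r lam mu zp zm n) = - decay_rate r lam mu n / 2"
  unfolding gdiag_def decay_rate_def by simp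

lemma l2_Pt:
  assumes r: "0 \<le> r" and t: "0 \<le> t" and u: "l2 u"
  shows "l2 (Pt r lam mu zp zm t u)"
proof -
  have le: "cmod (Pt r lam mu zp zm t u n) \<le> cmod (u n)" for n
  proof -
    have "t * Re (gdiag r lam mu zp zm n) \<le> 0"
      unfolding Re_gdiag using decay_rate_nonneg[OF r, of lam mu n] t by (simp add: mult_nonneg_nonpos)
    then have "exp (t * Re (gdiag r lam mu zp zm n)) \<le> 1" by simp
    then show ?thesis by (simp add: Pt_def norm_mult norm_exp_eq_Re mult_left_le_one_le)
  qed
  from u show ?thesis
    unfolding l2_def by (rule summable_comparison_test') (simp add: power_mono le)
qed

lemma domG_imp_l2: "domG u \<Longrightarrow> l2 u"
  unfolding l2_def domG_def
proof (erule summable_comparison_test'[of _ 1])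
  fix n :: nat assume "1 \<le> n"
  then have "1 * (cmod (u n))^2 \<le> (real n)^4 * (cmod (u n))^2" by (intro mult_right_mono) auto
  then show "norm ((cmod (u n))^2) \<le> ((real n)^2 * cmod (u n))^2"
    by (simp add: power_mult_distrib power4_eq_xxxx power2_eq_square mult_ac)
qed

lemma domG_summable_pow4: "domG u \<Longrightarrow> summable (\<lambda>n. (real (Suc n))^4 * (cmod (u n))^2)"
proof (rule summable_comparison_test'[of "\<lambda>n. 16 * ((real n)^2 * cmod (u n))^2" 1])
  assume "domG u"
  then show "summable (\<lambda>n. 16 * ((real n)^2 * cmod (u n))^2)" unfolding domG_def by (rule summable_mult)
  fix n :: nat assume "1 \<le> n"
  then have "(real (Suc n))^4 \<le> (2 * real n)^4" by (intro power_mono) auto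
  then have "(real (Suc n))^4 * (cmod (u n))^2 \<le> (2 * real n)^4 * (cmod (u n))^2" by (rule mult_right_mono) simp
  then show "norm ((real (Suc n))^4 * (cmod (u n))^2) \<le> 16 * ((real n)^2 * cmod (u n))^2"
    by (simp add: power_mult_distrib power2_eq_square power4_eq_xxxx mult_ac)
qed

text \<open>Summability of \<open>\<Sum> \<alpha>\<^sub>m |v\<^sub>m u\<^sub>m|\<close> needs the domain of \<open>G\<close>, since \<open>\<alpha>\<^sub>m\<close> grows like \<open>m\<^sup>2\<close>.\<close>
lemma summable_decay_rate_mult:
  assumes r: "0 \<le> r" and u: "domG u" and v: "domG v"
  shows "summable (\<lambda>m. decay_rate r lam mu m * cmod (cnj (v m) * u m))"
proof (rule summable_comparison_test)
  define K where "K = (lam^2 + mu^2) * (1 + r)"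
  have K: "0 \<le> K" unfolding K_def using r by simp
  show "summable (\<lambda>m. K * (((real (Suc m))^4 * (cmod (v m))^2 + (cmod (u m))^2) / 2))"
    using domG_summable_pow4[OF v] domG_imp_l2[OF u] unfolding l2_def
    by (intro summable_mult summable_divide summable_add)
  show "\<exists>N. \<forall>m\<ge>N. norm (decay_rate r lam mu m * cmod (cnj (v m) * u m))
      \<le> K * (((real (Suc m))^4 * (cmod (v m))^2 + (cmod (u m))^2) / 2)"
  proof (intro exI allI impI)
    fix m :: nat
    have "norm (decay_rate r lam mu m * cmod (cnj (v m) * u m)) = decay_rate r lam mu m * (cmod (v m) * cmod (u m))"
      using decay_rate_nonneg[OF r] by (simp add: norm_mult)
    also have "\<dots> \<le> K * ((real (Suc m))^2 * cmod (v m) * cmod (u m))"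
      using mult_right_mono[OF decay_rate_le[OF r], of "cmod (v m) * cmod (u m)" lam mu m]
      unfolding K_def by (simp add: mult_ac)
    also have "\<dots> \<le> K * ((((real (Suc m))^2 * cmod (v m))^2 + (cmod (u m))^2) / 2)"
      using sum_squares_bound[of "(real (Suc m))^2 * cmod (v m)" "cmod (u m)"]
      by (intro mult_left_mono K) simp
    finally show "norm (decay_rate r lam mu m * cmod (cnj (v m) * u m))
        \<le> K * (((real (Suc m))^4 * (cmod (v m))^2 + (cmod (u m))^2) / 2)"
      by (simp add: power_mult_distrib power2_eq_square power4_eq_xxxx mult_ac)
  qed
qed


lemma has_integral_exp_decay:
  fixes a :: real and c :: complex
  assumes t: "0 \<le> t"
  shows "((\<lambda>s. of_real (a * exp (- (t - s) * a)) * c) has_integral (c * of_real (1 - exp (- t * a)))) {0..t}"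
proof -
  have "((\<lambda>s. exp (- (t - s) * a)) has_real_derivative (exp (- (t - s) * a) * a)) (at s within {0..t})" for s
    by (auto intro!: derivative_eq_intros)
  then have "((\<lambda>s. of_real (exp (- (t - s) * a)) * c) has_vector_derivative
      of_real (exp (- (t - s) * a) * a) * c) (at s within {0..t})" for s
    by (intro has_vector_derivative_mult_left has_vector_derivative_of_real)
  from fundamental_theorem_of_calculus[OF t this] show ?thesis by (simp add: algebra_simps mult.commute)
qed

lemma has_integral_suminf_exp_decay:
  fixes a :: "nat \<Rightarrow> real" and c :: "nat \<Rightarrow> complex"
  assumes a: "\<And>m. 0 \<le> a m" and summable: "summable (\<lambda>m. a m * cmod (c m))" and t: "0 \<le> t"
  shows "((\<lambda>s. \<Sum>m. of_real (a m * exp (- (t - s) * a m)) * c m)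
     has_integral (\<Sum>m. c m * of_real (1 - exp (- t * a m)))) {0..t}"
proof -
  define summand where "summand m s = of_real (a m * exp (- (t - s) * a m)) * c m" for m s
  have bound: "norm (summand m s) \<le> a m * cmod (c m)" if "s \<in> {0..t}" for m s
  proof -
    have "exp (- (t - s) * a m) \<le> 1" using that a[of m] by (simp add: mult_nonpos_nonneg)
    then have "a m * exp (- (t - s) * a m) \<le> a m" using a[of m] by (rule mult_left_le)
    then have "\<bar>a m * exp (- (t - s) * a m)\<bar> \<le> a m" using a[of m] by simp
    then show ?thesis unfolding summand_def norm_mult norm_of_real by (rule mult_right_mono) simp
  qed
  have partial: "((\<lambda>s. \<Sum>m<N. summand m s) has_integral (\<Sum>m<N. c m * of_real (1 - exp (- t * a m)))) {0..t}" for N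
    unfolding summand_def by (intro has_integral_sum has_integral_exp_decay t finite_lessThan)
  obtain I J where I: "\<And>N. ((\<lambda>s. \<Sum>m<N. summand m s) has_integral I N) {0..t}"
    and J: "((\<lambda>s. \<Sum>m. summand m s) has_integral J) {0..t}" and IJ: "I \<longlonglongrightarrow> J"
    by (rule uniform_limit_integral[OF Weierstrass_m_test[OF bound summable]])
      (auto simp: summand_def intro!: continuous_intros)
  have "I = (\<lambda>N. \<Sum>m<N. c m * of_real (1 - exp (- t * a m)))"
    using has_integral_unique[OF I partial] by auto
  moreover have "summable (\<lambda>m. c m * of_real (1 - exp (- t * a m)))"
  proof (rule summable_comparison_test'[OF summable_mult[OF summable, of t]])
    fix m
    have "0 \<le> 1 - exp (- t * a m)" using t a[of m] by (simp add: mult_nonneg_nonneg)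
    then have "norm (c m * of_real (1 - exp (- t * a m))) = cmod (c m) * (1 - exp (- t * a m))"
      by (simp only: norm_mult norm_of_real abs_of_nonneg)
    also have "\<dots> \<le> cmod (c m) * (t * a m)"
      using exp_ge_add_one_self[of "- t * a m"] by (intro mult_left_mono) simp_all
    finally show "norm (c m * of_real (1 - exp (- t * a m))) \<le> t * (a m * cmod (c m))"
      by (simp add: algebra_simps)
  qed
  ultimately have "J = (\<Sum>m. c m * of_real (1 - exp (- t * a m)))"
    using IJ summable_LIMSEQ LIMSEQ_unique by blast
  with J show ?thesis unfolding summand_def by simp
qed

lemma cnj_scaled_mult: "cnj (of_real a * e * x) * (of_real a * e * y) = of_real (a^2) * (cnj e * e) * (cnj x * y)"
  by (simp add: mult_ac power2_eq_square)

lemma cnj_L1_Pt_mult: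
  assumes "0 \<le> r"
  shows "cnj (L1 r mu (Pt r lam mu zp zm t v) n) * L1 r mu (Pt r lam mu zp zm t u) n
    = of_real (mu^2 * omega r (Suc n) * exp (- t * decay_rate r lam mu (Suc n))) * (cnj (v (Suc n)) * u (Suc n))"
  unfolding L1_Pt cnj_scaled_mult norm2_exp_gdiag using omega_nonneg[OF assms] by (simp add: power_mult_distrib)

lemma cnj_L2_Pt_mult_Suc:
  assumes "0 \<le> r"
  shows "cnj (L2 r lam (Pt r lam mu zp zm t v) (Suc n)) * L2 r lam (Pt r lam mu zp zm t u) (Suc n)
    = of_real (lam^2 * omega r (Suc n) * exp (- t * decay_rate r lam mu n)) * (cnj (v n) * u n)"
  unfolding L2_Pt_Suc cnj_scaled_mult norm2_exp_gdiag using omega_nonneg[OF assms] by (simp add: power_mult_distrib)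

lemma summable_exp_decay_mult:
  fixes a k :: "nat \<Rightarrow> real" and c :: "nat \<Rightarrow> complex"
  assumes k: "\<And>m. 0 \<le> k m" "\<And>m. k m \<le> a m" and summable: "summable (\<lambda>m. a m * cmod (c m))" and t: "0 \<le> t"
  shows "summable (\<lambda>m. of_real (k m * exp (- t * a m)) * c m)"
proof (rule summable_comparison_test'[OF summable])
  fix m
  have "0 \<le> t * a m" using t k[of m] by simp
  then have "k m * exp (- t * a m) \<le> k m" using k(1) by (intro mult_left_le) auto
  then have "\<bar>k m * exp (- t * a m)\<bar> \<le> a m" using k[of m] by simp
  then show "norm (of_real (k m * exp (- t * a m)) * c m) \<le> a m * cmod (c m)"
    unfolding norm_mult norm_of_real by (rule mult_right_mono) simp
qed

text \<open>Since \<open>\<lambda>\<^sup>2\<omega>\<^sub>m\<^sub>+\<^sub>1 + \<mu>\<^sup>2\<omega>\<^sub>m\<close> is the decay rate \<open>\<alpha>\<^sub>m\<close>, the two jump terms combine into one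
  series; this is why the constant family \<open>\<one>\<close> solves the integral equation.\<close>
lemma jump_ip_eq_suminf:
  assumes r: "0 \<le> r" and u: "domG u" and v: "domG v" and t: "0 \<le> t"
  shows "ip (L1 r mu (Pt r lam mu zp zm t v)) (L1 r mu (Pt r lam mu zp zm t u))
       + ip (L2 r lam (Pt r lam mu zp zm t v)) (L2 r lam (Pt r lam mu zp zm t u))
     = (\<Sum>m. of_real (decay_rate r lam mu m * exp (- t * decay_rate r lam mu m)) * (cnj (v m) * u m))"
proof -
  define a where "a = decay_rate r lam mu"
  define c where "c m = cnj (v m) * u m" for m
  define F where "F m = of_real (mu^2 * omega r m * exp (- t * a m)) * c m" for m
  define H where "H m = of_real (lam^2 * omega r (Suc m) * exp (- t * a m)) * c m" for m
  have summable: "summable (\<lambda>m. a m * cmod (c m))"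
    unfolding a_def c_def by (rule summable_decay_rate_mult[OF r u v])
  have F: "summable F" and H: "summable H"
    unfolding F_def H_def using omega_nonneg[OF r]
    by (intro summable_exp_decay_mult[OF _ _ summable t]; simp add: a_def decay_rate_def)+
  have "(\<lambda>n. F (Suc n)) sums suminf F"
    using sums_Suc_iff[of F "suminf F"] summable_sums[OF F] by (simp add: F_def)
  then have L1: "ip (L1 r mu (Pt r lam mu zp zm t v)) (L1 r mu (Pt r lam mu zp zm t u)) = suminf F"
    unfolding ip_def cnj_L1_Pt_mult[OF r] by (simp add: sums_iff F_def a_def c_def)
  define L2_term where
    "L2_term n = cnj (L2 r lam (Pt r lam mu zp zm t v) n) * L2 r lam (Pt r lam mu zp zm t u) n" for n
  have "(\<lambda>n. L2_term (Suc n)) = H"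
    unfolding L2_term_def cnj_L2_Pt_mult_Suc[OF r] H_def a_def c_def ..
  then have "(\<lambda>n. L2_term (Suc n)) sums suminf H" using summable_sums[OF H] by simp
  then have L2: "ip (L2 r lam (Pt r lam mu zp zm t v)) (L2 r lam (Pt r lam mu zp zm t u)) = suminf H"
    using sums_Suc_iff[of L2_term "suminf H"] unfolding ip_def L2_term_def by (simp add: L2_0 sums_iff)
  have "(\<lambda>m. F m + H m) = (\<lambda>m. of_real (a m * exp (- t * a m)) * c m)"
    unfolding F_def H_def a_def decay_rate_def by (auto simp: algebra_simps)
  then show ?thesis unfolding L1 L2 suminf_add[OF F H] by (simp add: a_def c_def)
qed

lemma qds_integrand_idm_has_integral:
  assumes r: "0 \<le> r" and u: "domG u" and v: "domG v" and t: "0 \<le> t"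
  shows "((\<lambda>s. ip (L1 r mu (Pt r lam mu zp zm (t - s) v)) (L1 r mu (Pt r lam mu zp zm (t - s) u))
            + ip (L2 r lam (Pt r lam mu zp zm (t - s) v)) (L2 r lam (Pt r lam mu zp zm (t - s) u)))
         has_integral (ip v u - ip (Pt r lam mu zp zm t v) (Pt r lam mu zp zm t u))) {0..t}"
proof -
  define a where "a = decay_rate r lam mu"
  define c where "c m = cnj (v m) * u m" for m
  have a: "0 \<le> a m" for m unfolding a_def by (rule decay_rate_nonneg[OF r])
  have "(\<lambda>m. c m - of_real (exp (- t * a m)) * c m)
      sums (ip v u - ip (Pt r lam mu zp zm t v) (Pt r lam mu zp zm t u))"
  proof (rule sums_diff)
    show "c sums ip v u" unfolding c_def by (rule ip_sums[OF domG_imp_l2[OF u] domG_imp_l2[OF v]])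
    have "cnj (Pt r lam mu zp zm t v m) * Pt r lam mu zp zm t u m = of_real (exp (- t * a m)) * c m" for m
      unfolding Pt_def c_def a_def using norm2_exp_gdiag[of t r lam mu zp zm m] by (simp add: mult_ac)
    moreover have "l2 (Pt r lam mu zp zm t w)" if "domG w" for w
      by (rule l2_Pt[OF r t domG_imp_l2[OF that]])
    ultimately show "(\<lambda>m. of_real (exp (- t * a m)) * c m) sums ip (Pt r lam mu zp zm t v) (Pt r lam mu zp zm t u)"
      using ip_sums[of "Pt r lam mu zp zm t u" "Pt r lam mu zp zm t v"] u v by simp
  qed
  then have rhs: "ip v u - ip (Pt r lam mu zp zm t v) (Pt r lam mu zp zm t u) = (\<Sum>m. c m * of_real (1 - exp (- t * a m)))"
    by (simp add: sums_iff algebra_simps)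
  have "summable (\<lambda>m. a m * cmod (c m))" unfolding a_def c_def by (rule summable_decay_rate_mult[OF r u v])
  from has_integral_suminf_exp_decay[OF a this t]
  show ?thesis unfolding rhs
  proof (rule has_integral_eq[rotated])
    fix s assume "s \<in> {0..t}"
    then show "(\<Sum>m. of_real (a m * exp (- (t - s) * a m)) * c m)
      = ip (L1 r mu (Pt r lam mu zp zm (t - s) v)) (L1 r mu (Pt r lam mu zp zm (t - s) u))
        + ip (L2 r lam (Pt r lam mu zp zm (t - s) v)) (L2 r lam (Pt r lam mu zp zm (t - s) u))"
      using jump_ip_eq_suminf[OF r u v, of "t - s"] by (simp add: a_def c_def)
  qed
qed

section \<open>Matrix entries of the minimal semigroup\<close>

locale minimal_semigroup =
  fixes r lam mu zp zm :: real and T :: "real \<Rightarrow> mat \<Rightarrow> mat"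
  assumes r: "0 < r" and lam: "0 < lam" and lam_less_mu: "lam < mu"
    and minimal: "minimal_qds r lam mu zp zm T"
begin

abbreviation "g \<equiv> gdiag r lam mu zp zm"
abbreviation "\<omega> \<equiv> omega r"
abbreviation "\<alpha> \<equiv> decay_rate r lam mu"

definition entry_rate :: "nat \<Rightarrow> nat \<Rightarrow> complex" where
  "entry_rate i j = cnj (g i) + g j"

text \<open>The \<open>(i, j)\<close> entry of \<open>\<mu>\<^sup>2 B\<^sup>+ T\<^sub>s(x) B + \<lambda>\<^sup>2 B T\<^sub>s(x) B\<^sup>+\<close>.\<close>
definition jump_entry :: "mat \<Rightarrow> real \<Rightarrow> nat \<Rightarrow> nat \<Rightarrow> complex" where
  "jump_entry x s i j = of_real (mu^2 * sqrt (\<omega> i) * sqrt (\<omega> j)) * T s x (i - 1) (j - 1)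
     + of_real (lam^2 * sqrt (\<omega> (Suc i)) * sqrt (\<omega> (Suc j))) * T s x (Suc i) (Suc j)"

lemma mu: "0 < mu"
  using lam lam_less_mu by simp

lemma T_bdd_op: "0 \<le> t \<Longrightarrow> bdd_op x \<Longrightarrow> bdd_op (T t x)"
  using minimal unfolding minimal_qds_def qds_solution_def by blast

lemma T_positive: "0 \<le> t \<Longrightarrow> positive_op x \<Longrightarrow> positive_op (T t x)"
  using minimal unfolding minimal_qds_def qds_solution_def by blast

lemma T_qds_eq: "qds_eq r lam mu zp zm T"
  using minimal unfolding minimal_qds_def qds_solution_def by blast

lemma T_lincomb: "0 \<le> t \<Longrightarrow> bdd_op x \<Longrightarrow> bdd_op y \<Longrightarrow>
    T t (\<lambda>i j. a * x i j + b * y i j) = (\<lambda>i j. a * T t x i j + b * T t y i j)"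
  using minimal unfolding minimal_qds_def by blast

lemma T_minimal:
  "qds_solution r lam mu zp zm S \<Longrightarrow> 0 \<le> t \<Longrightarrow> positive_op x \<Longrightarrow> op_le (T t x) (S t x)"
  using minimal unfolding minimal_qds_def by blast

lemma omega_pos_Suc: "0 < \<omega> (Suc n)"
  using omega_pos[OF r] by simp

lemma abs_omega [simp]: "\<bar>\<omega> n\<bar> = \<omega> n"
  using omega_nonneg[of r n] r by simp

lemma sqrt_omega_mult_self: "sqrt (\<omega> i) * sqrt (\<omega> i) = \<omega> i"
  using omega_nonneg[of r i] r by simp

lemma sqrt_omega_mult_self_left: "sqrt (\<omega> i) * (sqrt (\<omega> i) * z) = \<omega> i * z"
  by (simp add: mult.assoc[symmetric] sqrt_omega_mult_self)

lemma Re_entry_rate: "Re (entry_rate i j) = - (\<alpha> i + \<alpha> j) / 2"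
  unfolding entry_rate_def by (simp add: Re_gdiag)

lemma entry_rate_diag: "entry_rate i i = - of_real (\<alpha> i)"
  unfolding entry_rate_def gdiag_def decay_rate_def by (simp add: complex_eq_iff)

text \<open>Testing the integral equation on basis vectors gives a scalar equation for each entry.\<close>
lemma entry_has_integral:
  assumes t: "0 \<le> t" and x: "bdd_op x"
  shows "((\<lambda>s. exp (of_real (t - s) * entry_rate i j) * jump_entry x s i j) has_integral
           (T t x i j - exp (of_real t * entry_rate i j) * x i j)) {0..t}"
proof -
  let ?P = "Pt r lam mu zp zm"
  have "((\<lambda>s. ip (L1 r mu (?P (t - s) (basis_vec 1 i))) (app (T s x) (L1 r mu (?P (t - s) (basis_vec 1 j))))
            + ip (L2 r lam (?P (t - s) (basis_vec 1 i))) (app (T s x) (L2 r lam (?P (t - s) (basis_vec 1 j)))))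
         has_integral (ip (basis_vec 1 i) (app (T t x) (basis_vec 1 j))
           - ip (?P t (basis_vec 1 i)) (app x (?P t (basis_vec 1 j))))) {0..t}"
    using T_qds_eq t x domG_basis_vec unfolding qds_eq_def by blast
  moreover have "ip (L1 r mu (?P (t - s) (basis_vec 1 i))) (app (T s x) (L1 r mu (?P (t - s) (basis_vec 1 j))))
      + ip (L2 r lam (?P (t - s) (basis_vec 1 i))) (app (T s x) (L2 r lam (?P (t - s) (basis_vec 1 j))))
    = exp (of_real (t - s) * entry_rate i j) * jump_entry x s i j" for s
  proof -
    have weight: "cnj (of_real c * of_real (sqrt (\<omega> k)) * exp (of_real (t - s) * g i))
        * (of_real c * of_real (sqrt (\<omega> l)) * exp (of_real (t - s) * g j))
      = of_real (c^2 * sqrt (\<omega> k) * sqrt (\<omega> l)) * exp (of_real (t - s) * entry_rate i j)" for c k l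
      using cnj_exp_mult_exp[of "t - s" "g i" "g j"] unfolding entry_rate_def
      by (simp add: power2_eq_square algebra_simps)
    let ?E = "\<lambda>c k l. cnj (of_real c * of_real (sqrt (\<omega> k)) * exp (of_real (t - s) * g i))
        * (of_real c * of_real (sqrt (\<omega> l)) * exp (of_real (t - s) * g j))"
    have "ip (L1 r mu (?P (t - s) (basis_vec 1 i))) (app (T s x) (L1 r mu (?P (t - s) (basis_vec 1 j))))
        + ip (L2 r lam (?P (t - s) (basis_vec 1 i))) (app (T s x) (L2 r lam (?P (t - s) (basis_vec 1 j))))
      = ?E mu i j * T s x (i - 1) (j - 1) + ?E lam (Suc i) (Suc j) * T s x (Suc i) (Suc j)"
      unfolding Pt_basis_vec L1_basis_vec L2_basis_vec ip_basis_vec app_basis_vec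
      by (simp only: mult_1_right mult_1_left mult_ac)
    also have "\<dots> = exp (of_real (t - s) * entry_rate i j) * jump_entry x s i j"
      unfolding weight jump_entry_def by (simp only: mult_ac distrib_left)
    finally show ?thesis .
  qed
  moreover have "ip (basis_vec 1 i) (app (T t x) (basis_vec 1 j)) - ip (?P t (basis_vec 1 i)) (app x (?P t (basis_vec 1 j)))
      = T t x i j - exp (of_real t * entry_rate i j) * x i j"
    unfolding Pt_basis_vec ip_basis_vec app_basis_vec using cnj_exp_mult_exp[of t "g i" "g j"]
    unfolding entry_rate_def by (simp add: algebra_simps)
  ultimately show ?thesis by simp
qed

lemma mild_solution_entry:
  "bdd_op x \<Longrightarrow> mild_solution (\<lambda>s. T s x i j) (\<lambda>s. jump_entry x s i j) (entry_rate i j) (x i j)"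
  unfolding mild_solution_def using entry_has_integral by blast

lemma T_0: "bdd_op x \<Longrightarrow> T 0 x = x"
  using mild_solution.initial_value[OF mild_solution_entry] by blast

lemma continuous_on_entry: "bdd_op x \<Longrightarrow> continuous_on {0..t} (\<lambda>s. T s x i j)"
  using mild_solution.continuous_on_solution[OF mild_solution_entry] by blast

lemma continuous_on_jump_entry: "bdd_op x \<Longrightarrow> continuous_on {0..t} (\<lambda>s. jump_entry x s i j)"
  unfolding jump_entry_def by (intro continuous_intros continuous_on_entry)

lemma entry_integral_equation:
  assumes "bdd_op x" "0 \<le> t"
  shows "((\<lambda>s. entry_rate i j * T s x i j + jump_entry x s i j) has_integral (T t x i j - x i j)) {0..t}"
  using mild_solution.has_integral_differential_form[OF mild_solution_entry continuous_on_jump_entry, OF assms(1,1,2)]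
  by (simp add: T_0[OF assms(1)])

end

section \<open>Fixed points\<close>

context minimal_semigroup
begin

lemma fixed_entry_recursion:
  assumes x: "bdd_op x" and fixed: "\<And>t. 0 \<le> t \<Longrightarrow> T t x = x"
  shows "entry_rate i j * x i j + of_real (mu^2 * sqrt (\<omega> i) * sqrt (\<omega> j)) * x (i - 1) (j - 1)
    + of_real (lam^2 * sqrt (\<omega> (Suc i)) * sqrt (\<omega> (Suc j))) * x (Suc i) (Suc j) = 0"
    (is "?K = 0")
proof -
  have "((\<lambda>s. entry_rate i j * T s x i j + jump_entry x s i j) has_integral 0) {0..1}"
    using entry_integral_equation[OF x, of 1 i j] by (simp add: fixed)
  then have "((\<lambda>s::real. ?K) has_integral 0) {0..1}"
    by (rule has_integral_eq[rotated]) (simp add: fixed jump_entry_def add.assoc)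
  moreover have "((\<lambda>s::real. ?K) has_integral ?K) {0..1}"
    using has_integral_const_real[of ?K 0 1] by simp
  ultimately show ?thesis by (rule has_integral_unique[symmetric])
qed

lemma fixed_diag_eq:
  assumes x: "bdd_op x" and fixed: "\<And>t. 0 \<le> t \<Longrightarrow> T t x = x"
  shows "x i i = x 0 0"
proof -
  have rec: "of_real (lam^2 * \<omega> (Suc i)) * (x (Suc i) (Suc i) - x i i)
      = of_real (mu^2 * \<omega> i) * (x i i - x (i - 1) (i - 1))" for i
  proof -
    have "- of_real (\<alpha> i) * x i i + of_real (mu^2 * \<omega> i) * x (i - 1) (i - 1)
        + of_real (lam^2 * \<omega> (Suc i)) * x (Suc i) (Suc i) = 0"
      using fixed_entry_recursion[OF x fixed, of i i]
      by (simp add: entry_rate_diag mult.assoc sqrt_omega_mult_self)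
    moreover have "of_real (lam^2 * \<omega> (Suc i)) * (x (Suc i) (Suc i) - x i i)
        - of_real (mu^2 * \<omega> i) * (x i i - x (i - 1) (i - 1))
      = - of_real (\<alpha> i) * x i i + of_real (mu^2 * \<omega> i) * x (i - 1) (i - 1)
        + of_real (lam^2 * \<omega> (Suc i)) * x (Suc i) (Suc i)"
      unfolding decay_rate_def by (simp add: algebra_simps)
    ultimately show ?thesis by simp
  qed
  have "x (Suc i) (Suc i) = x i i" for i
  proof (induction i)
    case 0
    then show ?case using rec[of 0] omega_pos_Suc[of 0] lam by simp
  next
    case (Suc i)
    then show ?case using rec[of "Suc i"] omega_pos_Suc[of "Suc i"] lam by simp
  qed
  then show ?thesis by (induction i) simp_all
qed

lemma norm_entry_rate_ge:
  "lam^2 * ((\<omega> (Suc i) + \<omega> (Suc j)) / 2) + mu^2 * ((\<omega> i + \<omega> j) / 2) \<le> cmod (entry_rate i j)"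
proof -
  have "- Re (entry_rate i j) \<le> cmod (entry_rate i j)"
    using abs_Re_le_cmod[of "entry_rate i j"] by (simp add: abs_le_iff)
  moreover have "- Re (entry_rate i j) = lam^2 * ((\<omega> (Suc i) + \<omega> (Suc j)) / 2) + mu^2 * ((\<omega> i + \<omega> j) / 2)"
    unfolding Re_entry_rate decay_rate_def by (simp add: field_simps)
  ultimately show ?thesis by simp
qed

text \<open>Triangle inequality in the recursion along the diagonal through \<open>(ka, kb)\<close>, with
  \<open>s\<^sub>n \<le> m\<^sub>n\<close> by AM-GM.\<close>
lemma fixed_offdiag_modulus_step:
  assumes x: "bdd_op x" and fixed: "\<And>t. 0 \<le> t \<Longrightarrow> T t x = x" and k: "ka = 0 \<or> kb = 0"
    and s: "\<And>n. s n = sqrt (\<omega> (n + ka)) * sqrt (\<omega> (n + kb))"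
    and m: "\<And>n. m n = (\<omega> (n + ka) + \<omega> (n + kb)) / 2"
    and p: "\<And>n. p n = cmod (x (n + ka) (n + kb))"
  shows "mu^2 * (m n * p n - s n * p (n - 1)) \<le> lam^2 * s (Suc n) * (p (Suc n) - p n)"
proof -
  let ?C = "entry_rate (n + ka) (n + kb)" and ?Y = "x (n + ka - 1) (n + kb - 1)"
  have s_nonneg: "0 \<le> s n" for n unfolding s using omega_nonneg[of r] r by simp
  have s0: "s 0 = 0" unfolding s using k by auto
  have "?C * x (n + ka) (n + kb) + of_real (mu^2 * s n) * ?Y
      + of_real (lam^2 * s (Suc n)) * x (Suc n + ka) (Suc n + kb) = 0"
    using fixed_entry_recursion[OF x fixed, of "n + ka" "n + kb"] unfolding s by (simp add: mult.assoc)
  then have "of_real (lam^2 * s (Suc n)) * x (Suc n + ka) (Suc n + kb)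
      = - (?C * x (n + ka) (n + kb) + of_real (mu^2 * s n) * ?Y)"
    unfolding eq_neg_iff_add_eq_0 by (simp add: add_ac)
  then have "cmod (of_real (lam^2 * s (Suc n)) * x (Suc n + ka) (Suc n + kb))
      = cmod (?C * x (n + ka) (n + kb) + of_real (mu^2 * s n) * ?Y)"
    by (simp only: norm_minus_cancel)
  then have "lam^2 * s (Suc n) * p (Suc n) = cmod (?C * x (n + ka) (n + kb) + of_real (mu^2 * s n) * ?Y)"
    using s_nonneg[of "Suc n"] unfolding p by (simp add: norm_mult norm_power)
  also have "\<dots> \<ge> cmod (?C * x (n + ka) (n + kb)) - cmod (of_real (mu^2 * s n) * ?Y)"
    by (rule norm_diff_ineq)
  also have "cmod (of_real (mu^2 * s n) * ?Y) = mu^2 * s n * p (n - 1)"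
    using s_nonneg[of n] s0 unfolding p by (cases n) (simp_all add: norm_mult norm_power)
  finally have "cmod ?C * p n - mu^2 * s n * p (n - 1) \<le> lam^2 * s (Suc n) * p (Suc n)"
    unfolding p by (simp add: norm_mult)
  moreover have "(lam^2 * s (Suc n) + mu^2 * m n) * p n \<le> cmod ?C * p n"
  proof (rule mult_right_mono)
    have "s (Suc n) \<le> m (Suc n)"
      unfolding s m real_sqrt_mult[symmetric] using omega_nonneg r by (intro arith_geo_mean_sqrt) auto
    then have "lam^2 * s (Suc n) \<le> lam^2 * m (Suc n)" by (rule mult_left_mono) simp
    moreover have "lam^2 * m (Suc n) + mu^2 * m n \<le> cmod ?C"
      using norm_entry_rate_ge[of "n + ka" "n + kb"] by (simp add: m)
    ultimately show "lam^2 * s (Suc n) + mu^2 * m n \<le> cmod ?C" by linarith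
  qed (simp add: p)
  ultimately show ?thesis by (simp add: algebra_simps)
qed

text \<open>Along an off-diagonal the moduli \<open>p\<^sub>n\<close> of a fixed point have increments satisfying the
  inequality of \<open>bounded_recursive_supersolution_eq_0\<close>, so they are constant; the first
  equation, in which the \<open>\<mu>\<^sup>2\<close>-term is missing, then forces them to vanish.\<close>
lemma fixed_offdiag_eq_0:
  assumes x: "bdd_op x" and fixed: "\<And>t. 0 \<le> t \<Longrightarrow> T t x = x"
    and k: "ka = 0 \<or> kb = 0" "0 < ka + kb"
  shows "x (n + ka) (n + kb) = 0"
proof -
  define s where "s n = sqrt (\<omega> (n + ka)) * sqrt (\<omega> (n + kb))" for n
  define m where "m n = (\<omega> (n + ka) + \<omega> (n + kb)) / 2" for n
  define p where "p n = cmod (x (n + ka) (n + kb))" for n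
  note step = fixed_offdiag_modulus_step[OF x fixed k(1) s_def m_def p_def]
  have s0: "s 0 = 0" unfolding s_def using k(1) by auto
  have s_le_m: "s n \<le> m n" for n
    unfolding s_def m_def real_sqrt_mult[symmetric] using omega_nonneg r by (intro arith_geo_mean_sqrt) auto
  have p: "0 \<le> p n" for n unfolding p_def by simp
  obtain B where B: "\<And>i j. cmod (x i j) \<le> B" using bdd_op_entry_bound[OF x] by blast
  have "p (Suc n) - p n = 0" for n
  proof (rule bounded_recursive_supersolution_eq_0[where s=s and B=B])
    show "0 < lam^2" "lam^2 < mu^2" using lam lam_less_mu by (simp_all add: power_strict_mono)
    show "s 0 = 0" by (fact s0)
    show "0 < s (Suc n)" for n unfolding s_def using omega_pos_Suc by simp
    show "s n \<le> (1 + r) * (1 + real (ka + kb))^2 * (real n + 1)^2" for n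
      using s_le_m[of n] omega_add_le[of r ka "ka + kb" n] omega_add_le[of r kb "ka + kb" n] r
      unfolding m_def by simp
    show "mu^2 * s n * (p (Suc (n - 1)) - p (n - 1)) \<le> lam^2 * s (Suc n) * (p (Suc n) - p n)" for n
    proof -
      have "mu^2 * s n * (p (Suc (n - 1)) - p (n - 1)) = mu^2 * (s n * p n - s n * p (n - 1))"
        using s0 by (cases n) (simp_all add: algebra_simps)
      also have "\<dots> \<le> mu^2 * (m n * p n - s n * p (n - 1))"
        using mult_right_mono[OF s_le_m p, of n n] by (intro mult_left_mono) simp_all
      also have "\<dots> \<le> lam^2 * s (Suc n) * (p (Suc n) - p n)" by (rule step)
      finally show ?thesis .
    qed
    show "p (Suc n) - p n \<le> B" for n
      unfolding p_def using B[of "Suc n + ka" "Suc n + kb"] norm_ge_zero[of "x (n + ka) (n + kb)"] by linarith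
  qed
  then have "p n = p 0" for n by (induction n) simp_all
  moreover have "p 0 = 0"
  proof -
    have "0 < m 0" unfolding m_def using k omega_pos[OF r, of "ka + kb"] by auto
    then have pos: "0 < mu^2 * m 0" using mu by simp
    have "mu^2 * m 0 * p 0 \<le> mu^2 * m 0 * 0" using step[of 0] s0 \<open>p 1 = p 0\<close> by simp
    then have "p 0 \<le> 0" by (simp only: mult_le_cancel_left_pos[OF pos])
    then show ?thesis using p[of 0] by simp
  qed
  ultimately show ?thesis unfolding p_def by simp
qed

lemma fixed_eq_scalar:
  assumes x: "bdd_op x" and fixed: "\<And>t. 0 \<le> t \<Longrightarrow> T t x = x"
  shows "x = (\<lambda>i j. x 0 0 * idm i j)"
proof (intro ext)
  fix i j
  show "x i j = x 0 0 * idm i j"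
  proof (cases i j rule: linorder_cases)
    case less
    then show ?thesis using fixed_offdiag_eq_0[OF x fixed, of 0 "j - i" i] by (simp add: idm_def)
  next
    case equal
    then show ?thesis using fixed_diag_eq[OF x fixed, of i] by (simp add: idm_def)
  next
    case greater
    then show ?thesis using fixed_offdiag_eq_0[OF x fixed, of "i - j" 0 j] by (simp add: idm_def)
  qed
qed

end

section \<open>Conservativity\<close>

context minimal_semigroup
begin

text \<open>Replacing \<open>T\<^sub>t(\<one>)\<close> by \<open>\<one>\<close> still gives a positive solution, so minimality yields \<open>T\<^sub>t(\<one>) \<le> \<one>\<close>.\<close>
definition with_identity :: "real \<Rightarrow> mat \<Rightarrow> mat" where
  "with_identity t y = (if y = idm then idm else T t y)"

lemma qds_solution_with_identity: "qds_solution r lam mu zp zm with_identity"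
  unfolding qds_solution_def
proof (intro conjI allI impI)
  show "bdd_op (with_identity t x)" if "0 \<le> t" "bdd_op x" for t :: real and x
    unfolding with_identity_def using that T_bdd_op bdd_op_idm by auto
  show "positive_op (with_identity t x)" if "0 \<le> t" "positive_op x" for t :: real and x
    unfolding with_identity_def using that T_positive positive_op_idm by auto
  show "qds_eq r lam mu zp zm with_identity"
    unfolding qds_eq_def
  proof (intro allI impI)
    fix t :: real and x :: mat and u v :: vec
    assume t: "0 \<le> t" and x: "bdd_op x" and u: "domG u" and v: "domG v"
    show "((\<lambda>s. ip (L1 r mu (Pt r lam mu zp zm (t - s) v)) (app (with_identity s x) (L1 r mu (Pt r lam mu zp zm (t - s) u)))
            + ip (L2 r lam (Pt r lam mu zp zm (t - s) v)) (app (with_identity s x) (L2 r lam (Pt r lam mu zp zm (t - s) u))))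
         has_integral (ip v (app (with_identity t x) u) - ip (Pt r lam mu zp zm t v) (app x (Pt r lam mu zp zm t u)))) {0..t}"
    proof (cases "x = idm")
      case True
      then show ?thesis
        unfolding with_identity_def using qds_integrand_idm_has_integral[OF _ u v t] r by (simp add: app_idm)
    next
      case False
      then show ?thesis unfolding with_identity_def using T_qds_eq t x u v unfolding qds_eq_def by simp
    qed
  qed
qed

lemma positive_op_idm_minus_T: "0 \<le> t \<Longrightarrow> positive_op (\<lambda>i j. idm i j - T t idm i j)"
  using T_minimal[OF qds_solution_with_identity _ positive_op_idm, of t]
  unfolding op_le_def with_identity_def by simp

lemma T_idm_diag_bounds:
  assumes "0 \<le> s"
  shows "Im (T s idm i i) = 0" and "0 \<le> Re (T s idm i i)" and "Re (T s idm i i) \<le> 1"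
  using positive_op_diag[OF T_positive[OF assms positive_op_idm], of i]
    positive_op_diag(2)[OF positive_op_idm_minus_T[OF assms], of i]
  by (simp_all add: idm_def)

definition idm_defect :: "nat \<Rightarrow> real \<Rightarrow> real" where
  "idm_defect i s = 1 - Re (T s idm i i)"

lemma idm_defect_integral_equation:
  assumes "0 \<le> t"
  shows "((\<lambda>s. \<alpha> i * idm_defect i s - mu^2 * \<omega> i * idm_defect (i - 1) s
      - lam^2 * \<omega> (Suc i) * idm_defect (Suc i) s) has_integral (- idm_defect i t)) {0..t}"
proof -
  have "Re (entry_rate i i * T s idm i i + jump_entry idm s i i)
      = \<alpha> i * idm_defect i s - mu^2 * \<omega> i * idm_defect (i - 1) s - lam^2 * \<omega> (Suc i) * idm_defect (Suc i) s" for s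
  proof -
    have "jump_entry idm s i i = of_real (mu^2 * \<omega> i) * T s idm (i - 1) (i - 1)
        + of_real (lam^2 * \<omega> (Suc i)) * T s idm (Suc i) (Suc i)"
      unfolding jump_entry_def by (simp add: mult.assoc sqrt_omega_mult_self)
    then show ?thesis
      unfolding entry_rate_diag idm_defect_def decay_rate_def by (simp add: algebra_simps)
  qed
  moreover have "Re (T t idm i i - idm i i) = - idm_defect i t" unfolding idm_defect_def idm_def by simp
  ultimately show ?thesis using has_integral_Re[OF entry_integral_equation[OF bdd_op_idm assms, of i i]] by simp
qed

text \<open>The time integrals \<open>E\<^sub>i\<close> of the defects \<open>1 - T\<^sub>t(\<one>)\<^sub>i\<^sub>i\<close> have increments obeying the
  inequality of \<open>bounded_recursive_supersolution_eq_0\<close>.\<close>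
lemma T_idm_diag:
  assumes t: "0 \<le> t"
  shows "T t idm i i = 1"
proof -
  define E where "E i = integral {0..t} (idm_defect i)" for i
  have E: "(idm_defect i has_integral E i) {0..t}" for i
    unfolding E_def idm_defect_def
    by (intro integrable_integral integrable_continuous_real continuous_intros continuous_on_entry bdd_op_idm)
  have defect: "0 \<le> idm_defect i s" "idm_defect i s \<le> 1" if "s \<in> {0..t}" for i s
    using T_idm_diag_bounds[of s i] that unfolding idm_defect_def by auto
  have E_bounds: "0 \<le> E i" "E i \<le> t" for i
  proof -
    show "0 \<le> E i" by (rule has_integral_nonneg[OF E]) (use defect in auto)
    have "((\<lambda>s. 1) has_integral t) {0..t}" using has_integral_const_real[of "1::real" 0 t] t by simp
    then show "E i \<le> t" by (rule has_integral_le[OF E]) (use defect in auto)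
  qed
  have rec: "lam^2 * \<omega> (Suc i) * (E (Suc i) - E i) = idm_defect i t + mu^2 * \<omega> i * (E i - E (i - 1))" for i
  proof -
    have "\<alpha> i * E i - mu^2 * \<omega> i * E (i - 1) - lam^2 * \<omega> (Suc i) * E (Suc i) = - idm_defect i t"
      using has_integral_unique[OF has_integral_diff[OF has_integral_diff[OF has_integral_mult_right[OF E]
          has_integral_mult_right[OF E]] has_integral_mult_right[OF E]] idm_defect_integral_equation[OF t]] .
    then show ?thesis unfolding decay_rate_def by (simp add: algebra_simps)
  qed
  have "E (Suc n) - E n = 0" for n
  proof (rule bounded_recursive_supersolution_eq_0[where s=\<omega> and B=t])
    show "0 < lam^2" "lam^2 < mu^2" using lam lam_less_mu by (simp_all add: power_strict_mono)
    show "\<omega> 0 = 0" "0 < \<omega> (Suc n)" for n by (simp_all add: omega_pos_Suc)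
    show "\<omega> n \<le> (1 + r) * (real n + 1)^2" for n
      using omega_add_le[of r 0 0 n] r by simp
    show "mu^2 * \<omega> n * (E (Suc (n - 1)) - E (n - 1)) \<le> lam^2 * \<omega> (Suc n) * (E (Suc n) - E n)" for n
      using rec[of n] defect[of t n] t by (cases n) simp_all
    show "E (Suc n) - E n \<le> t" for n using E_bounds[of "Suc n"] E_bounds[of n] by simp
  qed
  then have "idm_defect i t = 0" using rec[of i] by (cases i) simp_all
  then show ?thesis using T_idm_diag_bounds(1)[OF t, of i] unfolding idm_defect_def by (simp add: complex_eq_iff)
qed

lemma T_idm:
  assumes "0 \<le> t"
  shows "T t idm = idm"
proof (intro ext)
  fix i j
  have "idm i j - T t idm i j = 0"
    using positive_op_zero_diag[OF positive_op_idm_minus_T[OF assms], of i j] T_idm_diag[OF assms, of i]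
    by (simp add: idm_def)
  then show "T t idm i j = idm i j" by simp
qed

end

lemma bdd_op_scalar: "bdd_op (\<lambda>i j. c * idm i j)"
  using bdd_op_lincomb[OF bdd_op_idm bdd_op_idm, of c 0] by simp

lemma mmult_scalar: "mmult (\<lambda>i j. a * idm i j) (\<lambda>i j. b * idm i j) = (\<lambda>i j. (a * b) * idm i j)"
proof (intro ext)
  fix i j
  have "(\<lambda>k. a * idm i k * (b * idm k j)) = (\<lambda>k. if k = i then a * (b * idm i j) else 0)"
    by (auto simp: idm_def)
  then show "mmult (\<lambda>i j. a * idm i j) (\<lambda>i j. b * idm i j) i j = (a * b) * idm i j"
    unfolding mmult_def using sums_single[of i "\<lambda>_. a * (b * idm i j)"] by (simp add: sums_iff)
qed

lemma adj_scalar: "adj (\<lambda>i j. c * idm i j) = (\<lambda>i j. cnj c * idm i j)"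
  unfolding adj_def idm_def by (auto simp: fun_eq_iff)

context minimal_semigroup
begin

lemma T_hermitian:
  assumes h: "bdd_op h" "adj h = h" and t: "0 \<le> t"
  shows "T t h j i = cnj (T t h i j)"
proof -
  obtain c where c: "0 \<le> c" and P: "positive_op (\<lambda>i j. of_real c * idm i j + h i j)"
    using hermitian_shift_positive[OF h] by blast
  let ?P = "\<lambda>i j. of_real c * idm i j + h i j" and ?Q = "\<lambda>i j. complex_of_real c * idm i j"
  have Q: "positive_op ?Q" by (rule positive_op_scalar[OF c])
  have "T t h = T t (\<lambda>i j. 1 * ?P i j + (- 1) * ?Q i j)" by simp
  also have "\<dots> = (\<lambda>i j. 1 * T t ?P i j + (- 1) * T t ?Q i j)"
    using P Q unfolding positive_op_def by (intro T_lincomb[OF t]) auto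
  finally show ?thesis
    using positive_op_hermitian[OF T_positive[OF t P], of j i] positive_op_hermitian[OF T_positive[OF t Q], of j i]
    by simp
qed

text \<open>Split \<open>x\<close> into hermitian parts, on which \<open>T\<^sub>t\<close> preserves hermiticity.\<close>
lemma T_adj:
  assumes x: "bdd_op x" and t: "0 \<le> t"
  shows "T t (adj x) = adj (T t x)"
proof -
  define h1 where "h1 = (\<lambda>i j. (1/2) * x i j + (1/2) * adj x i j)"
  define h2 where "h2 = (\<lambda>i j. (1/(2*\<i>)) * x i j + (- 1/(2*\<i>)) * adj x i j)"
  have bdd: "bdd_op h1" "bdd_op h2" unfolding h1_def h2_def by (intro bdd_op_lincomb x bdd_op_adj)+
  have herm: "adj h1 = h1" "adj h2 = h2" unfolding h1_def h2_def adj_def by (auto simp: fun_eq_iff field_simps)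
  have x_eq: "x = (\<lambda>i j. 1 * h1 i j + \<i> * h2 i j)" unfolding h1_def h2_def by (auto simp: field_simps)
  have adj_x_eq: "adj x = (\<lambda>i j. 1 * h1 i j + (- \<i>) * h2 i j)"
    unfolding h1_def h2_def adj_def by (auto simp: field_simps)
  have T_x: "T t x = (\<lambda>i j. 1 * T t h1 i j + \<i> * T t h2 i j)"
    by (subst x_eq) (rule T_lincomb[OF t bdd])
  have T_adj_x: "T t (adj x) = (\<lambda>i j. 1 * T t h1 i j + (- \<i>) * T t h2 i j)"
    by (subst adj_x_eq) (rule T_lincomb[OF t bdd])
  show ?thesis
  proof (intro ext)
    fix i j
    show "T t (adj x) i j = adj (T t x) i j"
      unfolding T_adj_x T_x unfolding adj_def
      using T_hermitian[OF bdd(1) herm(1) t, of j i] T_hermitian[OF bdd(2) herm(2) t, of j i] by simp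
  qed
qed

lemma T_scalar: "0 \<le> t \<Longrightarrow> T t (\<lambda>i j. c * idm i j) = (\<lambda>i j. c * idm i j)"
  using T_lincomb[OF _ bdd_op_idm bdd_op_idm, of t c 0] T_idm by simp

lemma scalars_subset_fixed_pts: "scalars \<subseteq> fixed_pts T"
  unfolding scalars_def fixed_pts_def using bdd_op_scalar T_scalar by auto

lemma scalars_subset_dec_free: "scalars \<subseteq> dec_free T"
  unfolding scalars_def dec_free_def using bdd_op_scalar T_scalar by (auto simp: adj_scalar mmult_scalar)

lemma fixed_pts_subset_scalars: "fixed_pts T \<subseteq> scalars"
  unfolding scalars_def fixed_pts_def using fixed_eq_scalar by blast

end

section \<open>The decoherence-free subalgebra\<close>

lemma abs_Re_cross_term_le:
  assumes "0 \<le> a" "0 \<le> b"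
  shows "\<bar>2 * a * b * Re (cnj u * v)\<bar> \<le> a^2 * (cmod u)^2 + b^2 * (cmod v)^2"
proof -
  have "\<bar>Re (cnj u * v)\<bar> \<le> cmod u * cmod v" using abs_Re_le_cmod[of "cnj u * v"] by (simp add: norm_mult)
  then have "\<bar>2 * a * b * Re (cnj u * v)\<bar> \<le> 2 * (a * cmod u) * (b * cmod v)"
    using assms by (simp add: abs_mult mult_left_mono mult.assoc mult.left_commute)
  also have "\<dots> \<le> a^2 * (cmod u)^2 + b^2 * (cmod v)^2"
    using sum_squares_bound[of "a * cmod u" "b * cmod v"] by (simp add: power_mult_distrib)
  finally show ?thesis .
qed

lemma Re_cnj_mult_le:
  assumes a: "0 < a"
  shows "2 * Re (cnj y * h) \<le> (a / 2) * (cmod y)^2 + (2 / a) * (cmod h)^2"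
proof -
  have "2 * Re (cnj y * h) \<le> 2 * (cmod y * cmod h)"
    using complex_Re_le_cmod[of "cnj y * h"] by (simp add: norm_mult)
  moreover have "0 \<le> (a * cmod y - 2 * cmod h)^2 / (2 * a)" using a by simp
  moreover have "(a * cmod y - 2 * cmod h)^2 / (2 * a) = (a / 2) * (cmod y)^2 + (2 / a) * (cmod h)^2 - 2 * (cmod y * cmod h)"
    using a by (simp add: power2_diff power_mult_distrib field_simps power2_eq_square)
  ultimately show ?thesis by linarith
qed

lemma defect_step_identity:
  fixes Y0 Y1 Y2 ym0 ym1 yp0 yp2 :: complex and sK sK1 sn sn1 m2 l2 :: real
  shows "m2 * (cmod (of_real sK1 * Y2 - of_real sn * ym1))^2 + l2 * (cmod (of_real sK * Y0 - of_real sn1 * yp0))^2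
  = m2 * sn^2 * (cmod ym1)^2 + l2 * sn1^2 * (cmod yp0)^2 + (m2 * sK^2 + l2 * sK1^2) * (cmod Y1)^2
    - 2 * Re (cnj Y1 * (of_real (m2 * sK * sn) * ym0 + of_real (l2 * sK1 * sn1) * yp2))
    + (m2 * sK1^2 * (cmod Y2)^2 - 2 * m2 * sK1 * sn * Re (cnj Y2 * ym1) - l2 * sK1^2 * (cmod Y1)^2
       + 2 * l2 * sK1 * sn1 * Re (cnj Y1 * yp2))
    - (m2 * sK^2 * (cmod Y1)^2 - 2 * m2 * sK * sn * Re (cnj Y1 * ym0) - l2 * sK^2 * (cmod Y0)^2
       + 2 * l2 * sK * sn1 * Re (cnj Y0 * yp0))"
  unfolding cmod_power2 by (simp add: power2_eq_square algebra_simps)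

locale decoherence_free_element = minimal_semigroup +
  fixes x :: mat
  assumes bdd_x: "bdd_op x"
    and multiplicative: "\<And>t. 0 \<le> t \<Longrightarrow> T t (mmult (adj x) x) = mmult (T t (adj x)) (T t x)"
begin

abbreviation "y s k m \<equiv> T s x k m"

definition col_norm2 :: "nat \<Rightarrow> real \<Rightarrow> real" where
  "col_norm2 m s = (\<Sum>k. (cmod (y s k m))^2)"

lemma y_0: "y 0 k m = x k m"
  using T_0[OF bdd_x] by simp

lemma continuous_on_y: "continuous_on {0..t} (\<lambda>s. y s k m)"
  by (rule continuous_on_entry[OF bdd_x])

lemma sums_col_norm2: "0 \<le> s \<Longrightarrow> (\<lambda>k. (cmod (y s k m))^2) sums col_norm2 m s"
  unfolding col_norm2_def using bdd_op_column_l2[OF T_bdd_op[OF _ bdd_x]] unfolding l2_def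
  by (blast intro: summable_sums)

lemma T_adj_mult_diag:
  assumes s: "0 \<le> s"
  shows "T s (mmult (adj x) x) m m = of_real (col_norm2 m s)"
proof -
  have "T s (mmult (adj x) x) m m = (\<Sum>k. of_real ((cmod (y s k m))^2))"
    unfolding multiplicative[OF s] T_adj[OF bdd_x s] unfolding mmult_def adj_def cnj_mult_self ..
  also have "\<dots> = of_real (col_norm2 m s)"
    using sums_of_real[OF sums_col_norm2[OF s], where 'a=complex] by (simp add: sums_iff)
  finally show ?thesis .
qed

lemma continuous_on_col_norm2: "continuous_on {0..t} (col_norm2 m)"
proof -
  have "continuous_on {0..t} (\<lambda>s. Re (T s (mmult (adj x) x) m m))"
    by (intro continuous_intros continuous_on_entry bdd_op_mmult bdd_op_adj bdd_x)
  then show ?thesis by (rule continuous_on_eq) (auto simp: T_adj_mult_diag)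
qed

lemma col_norm2_integral_equation:
  assumes t: "0 \<le> t"
  shows "((\<lambda>s. - \<alpha> m * col_norm2 m s + mu^2 * \<omega> m * col_norm2 (m - 1) s + lam^2 * \<omega> (Suc m) * col_norm2 (Suc m) s)
     has_integral (col_norm2 m t - col_norm2 m 0)) {0..t}"
proof -
  have xx: "bdd_op (mmult (adj x) x)" by (intro bdd_op_mmult bdd_op_adj bdd_x)
  have "((\<lambda>s. Re (entry_rate m m * T s (mmult (adj x) x) m m + jump_entry (mmult (adj x) x) s m m))
      has_integral Re (T t (mmult (adj x) x) m m - mmult (adj x) x m m)) {0..t}"
    by (rule has_integral_Re[OF entry_integral_equation[OF xx t]])
  then have "((\<lambda>s. - \<alpha> m * col_norm2 m s + mu^2 * \<omega> m * col_norm2 (m - 1) s + lam^2 * \<omega> (Suc m) * col_norm2 (Suc m) s)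
      has_integral Re (T t (mmult (adj x) x) m m - mmult (adj x) x m m)) {0..t}"
  proof (rule has_integral_eq[rotated])
    fix s assume "s \<in> {0..t}"
    then show "Re (entry_rate m m * T s (mmult (adj x) x) m m + jump_entry (mmult (adj x) x) s m m)
      = - \<alpha> m * col_norm2 m s + mu^2 * \<omega> m * col_norm2 (m - 1) s + lam^2 * \<omega> (Suc m) * col_norm2 (Suc m) s"
      unfolding entry_rate_diag jump_entry_def by (simp add: T_adj_mult_diag mult.assoc sqrt_omega_mult_self_left)
  qed
  moreover have "mmult (adj x) x m m = of_real (col_norm2 m 0)"
    using T_adj_mult_diag[of 0 m] T_0[OF xx] by simp
  ultimately show ?thesis using T_adj_mult_diag[OF t] by simp
qed

lemma entry_norm2_integral_equation:
  assumes t: "0 \<le> t"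
  shows "((\<lambda>s. - (\<alpha> k + \<alpha> m) * (cmod (y s k m))^2 + 2 * Re (cnj (y s k m) * jump_entry x s k m))
     has_integral ((cmod (y t k m))^2 - (cmod (x k m))^2)) {0..t}"
proof -
  have "((\<lambda>s. 2 * Re (cnj (y s k m) * (entry_rate k m * y s k m + jump_entry x s k m)))
      has_integral ((cmod (y t k m))^2 - (cmod (y 0 k m))^2)) {0..t}"
    using entry_integral_equation[OF bdd_x] y_0
    by (intro has_integral_norm2_of_primitive t continuous_intros continuous_on_y continuous_on_jump_entry bdd_x) auto
  moreover have "2 * Re (cnj (y s k m) * (entry_rate k m * y s k m + jump_entry x s k m))
      = - (\<alpha> k + \<alpha> m) * (cmod (y s k m))^2 + 2 * Re (cnj (y s k m) * jump_entry x s k m)" for s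
  proof -
    have "cnj (y s k m) * (entry_rate k m * y s k m) = entry_rate k m * of_real ((cmod (y s k m))^2)"
      by (simp only: mult.left_commute[of "cnj (y s k m)"] cnj_mult_self)
    moreover have "Re (c * of_real a) = Re c * a" for c a by simp
    ultimately have "Re (cnj (y s k m) * (entry_rate k m * y s k m)) = Re (entry_rate k m) * (cmod (y s k m))^2"
      by (simp only:)
    then show ?thesis unfolding distrib_left Re_entry_rate by (simp add: algebra_simps)
  qed
  ultimately show ?thesis by (simp add: y_0)
qed

abbreviation "\<sigma> k \<equiv> sqrt (\<omega> k)"

text \<open>\<open>\<mu>\<^sup>2 |[B, T\<^sub>s(x)]\<^sub>k\<^sub>n|\<^sup>2 + \<lambda>\<^sup>2 |[B\<^sup>+, T\<^sub>s(x)]\<^sub>k\<^sub>n|\<^sup>2\<close>\<close>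
definition defect :: "nat \<Rightarrow> nat \<Rightarrow> real \<Rightarrow> real" where
  "defect n k s = mu^2 * (cmod (of_real (\<sigma> (Suc k)) * y s (Suc k) n - of_real (\<sigma> n) * y s k (n - 1)))^2
     + lam^2 * (cmod (of_real (\<sigma> k) * y s (k - 1) n - of_real (\<sigma> (Suc n)) * y s k (Suc n)))^2"

definition boundary :: "nat \<Rightarrow> nat \<Rightarrow> real \<Rightarrow> real" where
  "boundary n K s = mu^2 * (\<sigma> K)^2 * (cmod (y s K n))^2 - 2 * mu^2 * \<sigma> K * \<sigma> n * Re (cnj (y s K n) * y s (K - 1) (n - 1))
     - lam^2 * (\<sigma> K)^2 * (cmod (y s (K - 1) n))^2 + 2 * lam^2 * \<sigma> K * \<sigma> (Suc n) * Re (cnj (y s (K - 1) n) * y s K (Suc n))"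

lemma sigma_squared: "(\<sigma> k)^2 = \<omega> k"
  using omega_nonneg[of r k] r by simp

lemma sum_defect_eq:
  "(\<Sum>k<K. defect n k s) = mu^2 * \<omega> n * (\<Sum>k<K. (cmod (y s k (n - 1)))^2) + lam^2 * \<omega> (Suc n) * (\<Sum>k<K. (cmod (y s k (Suc n)))^2)
     + (\<Sum>k<K. \<alpha> k * (cmod (y s k n))^2) - (\<Sum>k<K. 2 * Re (cnj (y s k n) * jump_entry x s k n)) + boundary n K s"
proof (induction K)
  case 0
  show ?case unfolding boundary_def by simp
next
  case (Suc K)
  have "defect n K s = mu^2 * (\<sigma> n)^2 * (cmod (y s K (n - 1)))^2 + lam^2 * (\<sigma> (Suc n))^2 * (cmod (y s K (Suc n)))^2
      + (mu^2 * (\<sigma> K)^2 + lam^2 * (\<sigma> (Suc K))^2) * (cmod (y s K n))^2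
      - 2 * Re (cnj (y s K n) * jump_entry x s K n) + boundary n (Suc K) s - boundary n K s"
    unfolding defect_def boundary_def jump_entry_def diff_Suc_1 by (rule defect_step_identity)
  then show ?case unfolding sum.lessThan_Suc Suc.IH sigma_squared decay_rate_def by (simp add: algebra_simps)
qed

text \<open>Pointwise in time the damping \<open>\<Sum>\<^sub>k \<alpha>\<^sub>k |y\<^sub>k\<^sub>n|\<^sup>2\<close> need not be finite, but its time integral is;
  hence the argument runs on integrals over \<open>[0, 1]\<close>.\<close>
definition Iy :: "nat \<Rightarrow> nat \<Rightarrow> real" where "Iy m k = integral {0..1} (\<lambda>s. (cmod (y s k m))^2)"
definition Ijump :: "nat \<Rightarrow> nat \<Rightarrow> real" where "Ijump n k = integral {0..1} (\<lambda>s. 2 * Re (cnj (y s k n) * jump_entry x s k n))"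
definition Iboundary :: "nat \<Rightarrow> nat \<Rightarrow> real" where "Iboundary n K = integral {0..1} (boundary n K)"
definition Idefect :: "nat \<Rightarrow> nat \<Rightarrow> real" where "Idefect n k = integral {0..1} (defect n k)"
definition Icol :: "nat \<Rightarrow> real" where "Icol m = integral {0..1} (col_norm2 m)"

lemma has_integral_Iy: "((\<lambda>s. (cmod (y s k m))^2) has_integral Iy m k) {0..1}"
  unfolding Iy_def by (intro integrable_integral integrable_continuous_real continuous_intros continuous_on_y)

lemma has_integral_Ijump: "((\<lambda>s. 2 * Re (cnj (y s k n) * jump_entry x s k n)) has_integral Ijump n k) {0..1}"
  unfolding Ijump_def
  by (intro integrable_integral integrable_continuous_real continuous_intros continuous_on_y continuous_on_jump_entry bdd_x)

lemma has_integral_Iboundary: "(boundary n K has_integral Iboundary n K) {0..1}"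
  unfolding Iboundary_def boundary_def
  by (intro integrable_integral integrable_continuous_real continuous_intros continuous_on_y)

lemma continuous_on_defect: "continuous_on {0..1} (defect n k)"
  unfolding defect_def by (intro continuous_intros continuous_on_y)

lemma has_integral_Idefect: "(defect n k has_integral Idefect n k) {0..1}"
  unfolding Idefect_def by (intro integrable_integral integrable_continuous_real continuous_on_defect)

lemma has_integral_Icol: "(col_norm2 m has_integral Icol m) {0..1}"
  unfolding Icol_def by (intro integrable_integral integrable_continuous_real continuous_on_col_norm2)

lemma Iy_equation: "- (\<alpha> k + \<alpha> n) * Iy n k + Ijump n k = (cmod (y 1 k n))^2 - (cmod (x k n))^2"
  using has_integral_unique[OF has_integral_add[OF has_integral_mult_right[OF has_integral_Iy] has_integral_Ijump]
      entry_norm2_integral_equation[of 1 k n]]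
  by simp

lemma Icol_equation: "- \<alpha> n * Icol n + mu^2 * \<omega> n * Icol (n - 1) + lam^2 * \<omega> (Suc n) * Icol (Suc n) = col_norm2 n 1 - col_norm2 n 0"
  using has_integral_unique[OF has_integral_add[OF has_integral_add[OF has_integral_mult_right has_integral_mult_right]
      has_integral_mult_right, OF has_integral_Icol has_integral_Icol has_integral_Icol] col_norm2_integral_equation[of 1 n]]
  by simp

lemma sum_Idefect_eq:
  "(\<Sum>k<K. Idefect n k) = mu^2 * \<omega> n * (\<Sum>k<K. Iy (n - 1) k) + lam^2 * \<omega> (Suc n) * (\<Sum>k<K. Iy (Suc n) k)
     - \<alpha> n * (\<Sum>k<K. Iy n k) - (\<Sum>k<K. (cmod (y 1 k n))^2 - (cmod (x k n))^2) + Iboundary n K"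
proof -
  have lhs: "((\<lambda>s. \<Sum>k<K. defect n k s) has_integral (\<Sum>k<K. Idefect n k)) {0..1}"
    by (intro has_integral_sum has_integral_Idefect finite_lessThan)
  have rhs: "((\<lambda>s. \<Sum>k<K. defect n k s) has_integral (mu^2 * \<omega> n * (\<Sum>k<K. Iy (n - 1) k)
      + lam^2 * \<omega> (Suc n) * (\<Sum>k<K. Iy (Suc n) k) + (\<Sum>k<K. \<alpha> k * Iy n k) - (\<Sum>k<K. Ijump n k) + Iboundary n K)) {0..1}"
    unfolding sum_defect_eq
    by (intro has_integral_add has_integral_diff has_integral_mult_right has_integral_sum finite_lessThan
        has_integral_Iy has_integral_Ijump has_integral_Iboundary)
  have "(\<Sum>k<K. Idefect n k) = mu^2 * \<omega> n * (\<Sum>k<K. Iy (n - 1) k) + lam^2 * \<omega> (Suc n) * (\<Sum>k<K. Iy (Suc n) k)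
      + ((\<Sum>k<K. \<alpha> k * Iy n k) - (\<Sum>k<K. Ijump n k)) + Iboundary n K"
    using has_integral_unique[OF lhs rhs] by (simp add: algebra_simps)
  moreover have "\<alpha> k * Iy n k - Ijump n k = - \<alpha> n * Iy n k - ((cmod (y 1 k n))^2 - (cmod (x k n))^2)" for k
    using Iy_equation[of k n] by (simp add: algebra_simps)
  then have "(\<Sum>k<K. \<alpha> k * Iy n k) - (\<Sum>k<K. Ijump n k)
      = - \<alpha> n * (\<Sum>k<K. Iy n k) - (\<Sum>k<K. (cmod (y 1 k n))^2 - (cmod (x k n))^2)"
    by (simp add: sum_subtractf[symmetric] sum_distrib_left)
  ultimately show ?thesis by simp
qed

lemma Iy_nonneg: "0 \<le> Iy m k"
  by (rule has_integral_nonneg[OF has_integral_Iy]) simp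

lemma sum_norm2_le_col_norm2: "0 \<le> s \<Longrightarrow> (\<Sum>k<K. (cmod (y s k m))^2) \<le> col_norm2 m s"
  using sum_le_suminf[of "\<lambda>k. (cmod (y s k m))^2" "{..<K}"] sums_col_norm2[of s m] by (auto simp: sums_iff)

lemma has_integral_sum_Iy: "((\<lambda>s. \<Sum>k<K. (cmod (y s k m))^2) has_integral (\<Sum>k<K. Iy m k)) {0..1}"
  by (intro has_integral_sum has_integral_Iy finite_lessThan)

lemma sum_Iy_le_Icol: "(\<Sum>k<K. Iy m k) \<le> Icol m"
  by (rule has_integral_le[OF has_integral_sum_Iy has_integral_Icol]) (simp add: sum_norm2_le_col_norm2)

lemma Iy_le_Icol: "Iy m k \<le> Icol m"
  using sum_Iy_le_Icol[of m "Suc k"] sum_nonneg[of "{..<k}" "Iy m"] Iy_nonneg by simp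

lemma sum_Iy_tendsto: "(\<lambda>K. \<Sum>k<K. Iy m k) \<longlonglongrightarrow> Icol m"
proof -
  have "(\<lambda>K. integral {0..1} (\<lambda>s. \<Sum>k<K. (cmod (y s k m))^2)) \<longlonglongrightarrow> integral {0..1} (col_norm2 m)"
  proof (rule dominated_convergence(2))
    show "(\<lambda>s. \<Sum>k<K. (cmod (y s k m))^2) integrable_on {0..1}" for K using has_integral_sum_Iy by blast
    show "col_norm2 m integrable_on {0..1}" using has_integral_Icol by blast
    show "norm (\<Sum>k<K. (cmod (y s k m))^2) \<le> col_norm2 m s" if "s \<in> {0..1}" for K s
      using sum_norm2_le_col_norm2[of s m K] that by (simp add: sum_nonneg)
    show "(\<lambda>K. \<Sum>k<K. (cmod (y s k m))^2) \<longlonglongrightarrow> col_norm2 m s" if "s \<in> {0..1}" for s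
      using sums_col_norm2[of s m] that by (simp add: sums_def)
  qed
  then show ?thesis unfolding Icol_def integral_unique[OF has_integral_sum_Iy] .
qed

lemma Iy_tendsto_zero: "(\<lambda>k. Iy m k) \<longlonglongrightarrow> 0"
  by (intro summable_LIMSEQ_zero summableI_nonneg_bounded[OF Iy_nonneg sum_Iy_le_Icol])

lemma decay_rate_pos: "0 < \<alpha> k"
  unfolding decay_rate_def using omega_pos_Suc[of k] omega_nonneg[of r k] r lam by (simp add: add_pos_nonneg)

lemma norm2_jump_entry_le:
  "(cmod (jump_entry x s k n))^2 \<le> 2 * mu^4 * \<omega> k * \<omega> n * (cmod (y s (k - 1) (n - 1)))^2
     + 2 * lam^4 * \<omega> (Suc k) * \<omega> (Suc n) * (cmod (y s (Suc k) (Suc n)))^2"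
proof -
  have "(cmod (jump_entry x s k n))^2 \<le> 2 * (cmod (of_real (mu^2 * \<sigma> k * \<sigma> n) * y s (k - 1) (n - 1)))^2
      + 2 * (cmod (of_real (lam^2 * \<sigma> (Suc k) * \<sigma> (Suc n)) * y s (Suc k) (Suc n)))^2"
    unfolding jump_entry_def by (rule norm_add_squared_le)
  also have "\<dots> = 2 * (mu^2 * \<sigma> k * \<sigma> n)^2 * (cmod (y s (k - 1) (n - 1)))^2
      + 2 * (lam^2 * \<sigma> (Suc k) * \<sigma> (Suc n))^2 * (cmod (y s (Suc k) (Suc n)))^2"
    by (simp only: norm_mult norm_of_real power_mult_distrib power2_abs mult.assoc)
  also have "\<dots> = 2 * mu^4 * \<omega> k * \<omega> n * (cmod (y s (k - 1) (n - 1)))^2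
      + 2 * lam^4 * \<omega> (Suc k) * \<omega> (Suc n) * (cmod (y s (Suc k) (Suc n)))^2"
    by (simp add: power_mult_distrib sigma_squared flip: power_mult)
  finally show ?thesis .
qed

text \<open>AM-GM absorbs half of the damping \<open>\<alpha>\<^sub>k |y\<^sub>k\<^sub>n|\<^sup>2\<close> and bounds the rest by neighbouring entries.\<close>
lemma Ijump_le:
  "Ijump n k \<le> (\<alpha> k / 2) * Iy n k + 4 * mu^2 * \<omega> n * Iy (n - 1) (k - 1) + 4 * lam^2 * \<omega> (Suc n) * Iy (Suc n) (Suc k)"
proof -
  have a: "0 < \<alpha> k" by (rule decay_rate_pos)
  have am: "mu^2 * \<omega> k / \<alpha> k \<le> 1" and al: "lam^2 * \<omega> (Suc k) / \<alpha> k \<le> 1"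
    using a omega_nonneg[of r k] omega_nonneg[of r "Suc k"] r unfolding decay_rate_def by auto
  have "2 * Re (cnj (y s k n) * jump_entry x s k n) \<le> (\<alpha> k / 2) * (cmod (y s k n))^2
      + 4 * mu^2 * \<omega> n * (cmod (y s (k - 1) (n - 1)))^2 + 4 * lam^2 * \<omega> (Suc n) * (cmod (y s (Suc k) (Suc n)))^2" for s
  proof -
    have "2 * Re (cnj (y s k n) * jump_entry x s k n) \<le> (\<alpha> k / 2) * (cmod (y s k n))^2 + (2 / \<alpha> k) * (cmod (jump_entry x s k n))^2"
      by (rule Re_cnj_mult_le[OF a])
    also have "(2 / \<alpha> k) * (cmod (jump_entry x s k n))^2 \<le> (2 / \<alpha> k) * (2 * mu^4 * \<omega> k * \<omega> n * (cmod (y s (k - 1) (n - 1)))^2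
        + 2 * lam^4 * \<omega> (Suc k) * \<omega> (Suc n) * (cmod (y s (Suc k) (Suc n)))^2)"
      by (rule mult_left_mono[OF norm2_jump_entry_le]) (use a in simp)
    also have "\<dots> = 4 * (mu^2 * \<omega> k / \<alpha> k) * (mu^2 * \<omega> n * (cmod (y s (k - 1) (n - 1)))^2)
        + 4 * (lam^2 * \<omega> (Suc k) / \<alpha> k) * (lam^2 * \<omega> (Suc n) * (cmod (y s (Suc k) (Suc n)))^2)"
      using a by (simp add: field_simps power2_eq_square power4_eq_xxxx)
    also have "\<dots> \<le> 4 * 1 * (mu^2 * \<omega> n * (cmod (y s (k - 1) (n - 1)))^2) + 4 * 1 * (lam^2 * \<omega> (Suc n) * (cmod (y s (Suc k) (Suc n)))^2)"
      using am al omega_nonneg[of r n] omega_nonneg[of r "Suc n"] r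
      by (intro add_mono mult_right_mono mult_left_mono) auto
    finally show ?thesis by (simp add: algebra_simps)
  qed
  moreover have "((\<lambda>s. (\<alpha> k / 2) * (cmod (y s k n))^2 + 4 * mu^2 * \<omega> n * (cmod (y s (k - 1) (n - 1)))^2
      + 4 * lam^2 * \<omega> (Suc n) * (cmod (y s (Suc k) (Suc n)))^2) has_integral
      ((\<alpha> k / 2) * Iy n k + 4 * mu^2 * \<omega> n * Iy (n - 1) (k - 1) + 4 * lam^2 * \<omega> (Suc n) * Iy (Suc n) (Suc k))) {0..1}"
    by (intro has_integral_add has_integral_mult_right has_integral_Iy)
  ultimately show ?thesis by (intro has_integral_le[OF has_integral_Ijump]) auto
qed

lemma decay_rate_Iy_le:
  "(\<alpha> k / 2) * Iy n k \<le> 4 * mu^2 * \<omega> n * Iy (n - 1) (k - 1) + 4 * lam^2 * \<omega> (Suc n) * Iy (Suc n) (Suc k) + (cmod (x k n))^2"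
proof -
  have "(\<alpha> k + \<alpha> n) * Iy n k \<le> Ijump n k + (cmod (x k n))^2"
    using Iy_equation[of k n] by (simp add: algebra_simps)
  moreover have "0 \<le> \<alpha> n * Iy n k" using decay_rate_pos[of n] Iy_nonneg[of n k] by simp
  moreover have "(\<alpha> k + \<alpha> n) * Iy n k = (\<alpha> k / 2) * Iy n k + (\<alpha> k / 2) * Iy n k + \<alpha> n * Iy n k"
    by (simp add: algebra_simps)
  ultimately show ?thesis using Ijump_le[of n k] by linarith
qed

lemma sum_Iy_pred_le: "(\<Sum>k<K. Iy m (k - 1)) \<le> 2 * Icol m"
proof (cases K)
  case (Suc K')
  have "(\<Sum>k<K. Iy m (k - 1)) = Iy m 0 + (\<Sum>k<K'. Iy m k)"
    unfolding Suc sum.lessThan_Suc_shift by simp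
  then show ?thesis using Iy_le_Icol[of m 0] sum_Iy_le_Icol[of m K'] by simp
qed (use Iy_le_Icol[of m 0] Iy_nonneg[of m 0] in simp)

lemma sum_Iy_Suc_le: "(\<Sum>k<K. Iy m (Suc k)) \<le> Icol m"
  using sum_Iy_le_Icol[of m "Suc K"] Iy_nonneg[of m 0] unfolding sum.lessThan_Suc_shift by simp

lemma summable_decay_rate_Iy: "summable (\<lambda>k. \<alpha> k * Iy n k)"
proof -
  define C where "C = 4 * mu^2 * \<omega> n * (2 * Icol (n - 1)) + 4 * lam^2 * \<omega> (Suc n) * Icol (Suc n) + col_norm2 n 0"
  have bounded: "(\<Sum>k<K. (\<alpha> k / 2) * Iy n k) \<le> C" for K
  proof -
    have "(\<Sum>k<K. (\<alpha> k / 2) * Iy n k)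
        \<le> (\<Sum>k<K. 4 * mu^2 * \<omega> n * Iy (n - 1) (k - 1) + 4 * lam^2 * \<omega> (Suc n) * Iy (Suc n) (Suc k) + (cmod (x k n))^2)"
      by (rule sum_mono) (rule decay_rate_Iy_le)
    also have "\<dots> = 4 * mu^2 * \<omega> n * (\<Sum>k<K. Iy (n - 1) (k - 1)) + 4 * lam^2 * \<omega> (Suc n) * (\<Sum>k<K. Iy (Suc n) (Suc k))
        + (\<Sum>k<K. (cmod (x k n))^2)"
      by (simp add: sum.distrib sum_distrib_left)
    also have "\<dots> \<le> C"
      unfolding C_def using omega_nonneg[of r n] omega_nonneg[of r "Suc n"] r sum_norm2_le_col_norm2[of 0 n K]
      by (intro add_mono mult_left_mono sum_Iy_pred_le sum_Iy_Suc_le) (simp_all add: y_0)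
    finally show ?thesis .
  qed
  have "summable (\<lambda>k. (\<alpha> k / 2) * Iy n k)"
    by (rule summableI_nonneg_bounded[OF _ bounded]) (use decay_rate_pos Iy_nonneg in \<open>simp add: less_imp_le\<close>)
  from summable_mult[OF this, of 2] show ?thesis by simp
qed

lemma abs_boundary_le:
  "\<bar>boundary n (Suc K) s\<bar> \<le> 2 * mu^2 * \<omega> (Suc K) * (cmod (y s (Suc K) n))^2 + mu^2 * \<omega> n * (cmod (y s K (n - 1)))^2
     + 2 * lam^2 * \<omega> (Suc K) * (cmod (y s K n))^2 + lam^2 * \<omega> (Suc n) * (cmod (y s (Suc K) (Suc n)))^2"
proof -
  define A where "A = 2 * \<sigma> (Suc K) * \<sigma> n * Re (cnj (y s (Suc K) n) * y s K (n - 1))"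
  define B where "B = 2 * \<sigma> (Suc K) * \<sigma> (Suc n) * Re (cnj (y s K n) * y s (Suc K) (Suc n))"
  have "\<bar>A\<bar> \<le> \<omega> (Suc K) * (cmod (y s (Suc K) n))^2 + \<omega> n * (cmod (y s K (n - 1)))^2"
    using abs_Re_cross_term_le[of "\<sigma> (Suc K)" "\<sigma> n" "y s (Suc K) n" "y s K (n - 1)"]
      omega_nonneg[of r "Suc K"] omega_nonneg[of r n] r
    unfolding A_def sigma_squared by simp
  then have mA: "\<bar>mu^2 * A\<bar> \<le> mu^2 * (\<omega> (Suc K) * (cmod (y s (Suc K) n))^2 + \<omega> n * (cmod (y s K (n - 1)))^2)"
    by (simp add: abs_mult mult_left_mono)
  have "\<bar>B\<bar> \<le> \<omega> (Suc K) * (cmod (y s K n))^2 + \<omega> (Suc n) * (cmod (y s (Suc K) (Suc n)))^2"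
    using abs_Re_cross_term_le[of "\<sigma> (Suc K)" "\<sigma> (Suc n)" "y s K n" "y s (Suc K) (Suc n)"]
      omega_nonneg[of r "Suc K"] omega_nonneg[of r "Suc n"] r
    unfolding B_def sigma_squared by simp
  then have mB: "\<bar>lam^2 * B\<bar> \<le> lam^2 * (\<omega> (Suc K) * (cmod (y s K n))^2 + \<omega> (Suc n) * (cmod (y s (Suc K) (Suc n)))^2)"
    by (simp add: abs_mult mult_left_mono)
  have "boundary n (Suc K) s = mu^2 * \<omega> (Suc K) * (cmod (y s (Suc K) n))^2 - mu^2 * A
      - lam^2 * \<omega> (Suc K) * (cmod (y s K n))^2 + lam^2 * B"
    unfolding boundary_def A_def B_def sigma_squared by (simp add: algebra_simps)
  moreover have "0 \<le> mu^2 * \<omega> (Suc K) * (cmod (y s (Suc K) n))^2" "0 \<le> lam^2 * \<omega> (Suc K) * (cmod (y s K n))^2"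
    using omega_nonneg[of r "Suc K"] r by simp_all
  ultimately show ?thesis using mA mB by (simp add: abs_le_iff algebra_simps)
qed

lemma Iboundary_tendsto_zero: "(\<lambda>K. Iboundary n (Suc K)) \<longlonglongrightarrow> 0"
proof -
  define g where "g K = 2 * mu^2 * \<omega> (Suc K) * Iy n (Suc K) + mu^2 * \<omega> n * Iy (n - 1) K
     + 2 * lam^2 * \<omega> (Suc K) * Iy n K + lam^2 * \<omega> (Suc n) * Iy (Suc n) (Suc K)" for K
  have g_bound: "norm (Iboundary n (Suc K)) \<le> g K" for K
  proof -
    have g: "((\<lambda>s. 2 * mu^2 * \<omega> (Suc K) * (cmod (y s (Suc K) n))^2 + mu^2 * \<omega> n * (cmod (y s K (n - 1)))^2
      + 2 * lam^2 * \<omega> (Suc K) * (cmod (y s K n))^2 + lam^2 * \<omega> (Suc n) * (cmod (y s (Suc K) (Suc n)))^2) has_integral g K) {0..1}"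
      unfolding g_def by (intro has_integral_add has_integral_mult_right has_integral_Iy)
    have "Iboundary n (Suc K) \<le> g K" "- Iboundary n (Suc K) \<le> g K"
      by (rule has_integral_le[OF has_integral_Iboundary g] has_integral_le[OF has_integral_neg[OF has_integral_Iboundary] g],
          use abs_boundary_le in \<open>auto simp: abs_le_iff\<close>)+
    then show ?thesis by simp
  qed
  have g_lim: "g \<longlonglongrightarrow> 0"
  proof (rule Lim_null_comparison[OF always_eventually])
    define damping where "damping K = \<alpha> K * Iy n K" for K
    have damping: "damping \<longlonglongrightarrow> 0" unfolding damping_def by (rule summable_LIMSEQ_zero[OF summable_decay_rate_Iy])
    define h where "h K = 2 * damping (Suc K) + mu^2 * \<omega> n * Iy (n - 1) K + 2 * damping K
      + lam^2 * \<omega> (Suc n) * Iy (Suc n) (Suc K)" for K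
    have "h \<longlonglongrightarrow> 2 * 0 + mu^2 * \<omega> n * 0 + 2 * 0 + lam^2 * \<omega> (Suc n) * 0"
      unfolding h_def by (intro tendsto_intros LIMSEQ_Suc[OF damping] damping Iy_tendsto_zero LIMSEQ_Suc[OF Iy_tendsto_zero])
    then show "h \<longlonglongrightarrow> 0" by simp
    show "\<forall>K. norm (g K) \<le> h K"
    proof
      fix K
      have "mu^2 * \<omega> (Suc K) * Iy n (Suc K) \<le> damping (Suc K)" "lam^2 * \<omega> (Suc K) * Iy n K \<le> damping K"
        unfolding damping_def decay_rate_def using Iy_nonneg omega_nonneg[of r] r
        by (auto intro!: mult_right_mono)
      moreover have "0 \<le> g K"
        unfolding g_def using Iy_nonneg omega_nonneg[of r] r by (auto intro!: add_nonneg_nonneg mult_nonneg_nonneg)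
      ultimately show "norm (g K) \<le> h K" unfolding g_def h_def by simp
    qed
  qed
  show ?thesis by (rule Lim_null_comparison[OF always_eventually g_lim]) (use g_bound in blast)
qed

lemma Idefect_eq_0: "Idefect n k = 0"
proof -
  have nonneg: "0 \<le> Idefect n k" for k
    by (rule has_integral_nonneg[OF has_integral_Idefect]) (simp add: defect_def)
  have "(\<lambda>k. (cmod (y 1 k n))^2 - (cmod (x k n))^2) sums (col_norm2 n 1 - col_norm2 n 0)"
    using sums_diff[OF sums_col_norm2[of 1 n] sums_col_norm2[of 0 n]] by (simp add: y_0)
  then have energy: "(\<lambda>K. \<Sum>k<K. (cmod (y 1 k n))^2 - (cmod (x k n))^2) \<longlonglongrightarrow> col_norm2 n 1 - col_norm2 n 0"
    by (simp add: sums_def)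
  have "(\<lambda>K. \<Sum>k<Suc K. Idefect n k) \<longlonglongrightarrow> mu^2 * \<omega> n * Icol (n - 1) + lam^2 * \<omega> (Suc n) * Icol (Suc n)
      - \<alpha> n * Icol n - (col_norm2 n 1 - col_norm2 n 0) + 0"
    unfolding sum_Idefect_eq
    by (intro tendsto_intros LIMSEQ_Suc[OF sum_Iy_tendsto] LIMSEQ_Suc[OF energy] Iboundary_tendsto_zero)
  then have lim: "(\<lambda>K. \<Sum>k<Suc K. Idefect n k) \<longlonglongrightarrow> 0" using Icol_equation[of n] by (simp add: algebra_simps)
  have "incseq (\<lambda>K. \<Sum>k<Suc K. Idefect n k)" by (rule incseq_SucI) (simp add: nonneg)
  from this lim have "(\<Sum>k'<k. Idefect n k') + Idefect n k \<le> 0"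
    using incseq_le by (simp only: sum.lessThan_Suc)
  moreover have "0 \<le> (\<Sum>k'<k. Idefect n k')" by (intro sum_nonneg nonneg)
  ultimately show ?thesis using nonneg[of k] by linarith
qed

lemma defect_at_0: "defect n k 0 = 0"
proof (rule has_integral_0_cbox_imp_0[of 0 1 "defect n k" 0])
  show "continuous_on (cbox 0 1) (defect n k)" using continuous_on_defect by simp
  show "(defect n k has_integral 0) (cbox 0 1)" using has_integral_Idefect[of n k] by (simp add: Idefect_eq_0)
qed (simp_all add: defect_def)

text \<open>\<open>x\<close> commutes with \<open>B\<close> and \<open>B\<^sup>+\<close>.\<close>
lemma commutation_relations:
  "of_real (\<sigma> (Suc k)) * x (Suc k) n = of_real (\<sigma> n) * x k (n - 1)"
  "of_real (\<sigma> k) * x (k - 1) n = of_real (\<sigma> (Suc n)) * x k (Suc n)"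
proof -
  have "mu^2 * (cmod (of_real (\<sigma> (Suc k)) * x (Suc k) n - of_real (\<sigma> n) * x k (n - 1)))^2
      + lam^2 * (cmod (of_real (\<sigma> k) * x (k - 1) n - of_real (\<sigma> (Suc n)) * x k (Suc n)))^2 = 0"
    using defect_at_0[of n k] unfolding defect_def y_0 .
  then show "of_real (\<sigma> (Suc k)) * x (Suc k) n = of_real (\<sigma> n) * x k (n - 1)"
    "of_real (\<sigma> k) * x (k - 1) n = of_real (\<sigma> (Suc n)) * x k (Suc n)"
    using mu lam by (simp_all add: add_nonneg_eq_0_iff)
qed

lemma x_eq_scalar: "x = (\<lambda>i j. x 0 0 * idm i j)"
proof -
  have omega_neq_0: "\<omega> (Suc k) \<noteq> 0" for k using omega_pos_Suc[of k] by simp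
  then have sigma_pos: "\<sigma> (Suc k) \<noteq> 0" for k by simp
  have first_col: "x (Suc k) 0 = 0" for k
    using commutation_relations(1)[of k 0] sigma_pos[of k] by simp
  have first_row: "x 0 (Suc j) = 0" for j
    using commutation_relations(2)[of 0 j] sigma_pos[of j] by simp
  have diagonal_shift: "x (Suc i) (Suc j) = of_real (\<sigma> (Suc i) / \<sigma> (Suc j)) * x i j" for i j
    using commutation_relations(2)[of "Suc i" j] sigma_pos[of j] by (simp add: field_simps)
  have "x i j = x 0 0 * idm i j" for i j
  proof (induction i arbitrary: j)
    case 0
    then show ?case by (cases j) (auto simp: idm_def first_row)
  next
    case (Suc i)
    then show ?case by (cases j) (auto simp: idm_def first_col diagonal_shift omega_neq_0)
  qed
  then show ?thesis by (intro ext)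
qed

end

context minimal_semigroup
begin

lemma dec_free_subset_scalars: "dec_free T \<subseteq> scalars"
proof
  fix x assume "x \<in> dec_free T"
  then interpret decoherence_free_element r lam mu zp zm T x
    by unfold_locales (auto simp: dec_free_def)
  show "x \<in> scalars" unfolding scalars_def using x_eq_scalar by blast
qed

end

theorem proposition3p3:
  fixes r lam mu zp zm :: real and T :: "real \<Rightarrow> mat \<Rightarrow> mat"
  assumes "0 < r" and "0 < lam" and "lam < mu"
    and "minimal_qds r lam mu zp zm T"
  shows "dec_free T = scalars \<and> fixed_pts T = scalars"
proof -
  interpret minimal_semigroup r lam mu zp zm T
    using assms by unfold_locales
  show ?thesis
    using dec_free_subset_scalars scalars_subset_dec_free fixed_pts_subset_scalars scalars_subset_fixed_pts
    by blast
qed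

end
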